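(* Let $\mathcal G$ be a Markov $\alpha$-potential game with $\alpha$-potential function $\Phi$ and stage payoffs $u_i(s,a)\in[0,1]$, and let $(\pi^{(t)})$ be generated by the projected gradient-ascent algorithm with step size $\eta>0$. Then for every $\nu\in\Delta(S)$ and every $t$, $$\Phi(\nu,\pi^{(t+1)})-\Phi(\nu,\pi^{(t)})\ge\frac{1}{2\eta(1-\delta)}\sum_{i\in I}\sum_{s\in S}d_\nu^{\pi_i^{(t+1)},\pi_{-i}^{(t)}}(s)\,\big\|\pi_i^{(t+1)}(s)-\pi_i^{(t)}(s)\big\|_2^2-\frac{4\eta^2\bar A^2|I|^2}{(1-\delta)^5}-|I|^2\alpha.$$
   Context: Markov game $\langle I,S,(A_i),(u_i),P,\delta\rangle$ with finite $I,S,A_i$, $\delta\in(0,1)$; $\bar A=\max_i|A_i|$. Stationary policies $\pi_i$ with $\pi_i(s)\in\Delta(A_i)$, sets $\Pi_i$, $\Pi$, $\Pi_{-i}$; $\pi_{-i}(s,a_{-i})=\prod_{j\ne i}\pi_j(s,a_j)$. $V_i(\mu,\pi)=\mathbb E[\sum_k\delta^k u_i(s^k,a^k)]$ with $s^0\sim\mu$, $a^k\sim\pi(s^k)$, $s^{k+1}\sim P(\cdot|s^k,a^k)$; $V_i(s,\pi)$ for initial state $s$. Markov $\alpha$-potential game: exists $\Phi:S\times\Pi\to\mathbb R$ with $|(\Phi(s,\pi_i',\pi_{-i})-\Phi(s,\pi_i,\pi_{-i}))-(V_i(s,\pi_i',\pi_{-i})-V_i(s,\pi_i,\pi_{-i}))|\le\alpha$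 for all $s,i,\pi_i,\pi_i',\pi_{-i}$; $\Phi(\nu,\pi)=\sum_s\nu(s)\Phi(s,\pi)$. Discounted visitation distribution: $d_\nu^\pi(s)=(1-\delta)\sum_{k\ge0}\delta^k\Pr(s^k=s\mid s^0\sim\nu)$ under $\pi$. Q-function: $Q_i(s,a_i;\pi)=\sum_{a_{-i}}\pi_{-i}(s,a_{-i})\big(u_i(s,a_i,a_{-i})+\delta\sum_{s'}P(s'|s,a)V_i(s',\pi)\big)$, and $Q_i(s;\pi)=(Q_i(s,a_i;\pi))_{a_i\in A_i}$. Projected gradient-ascent algorithm: $\pi_i^{(0)}(s,a_i)=1/|A_i|$, and for $t=0,1,\dots$, for all $i,s$: $\pi_i^{(t+1)}(s)=\mathcal P_{\Delta(A_i)}\big(\pi_i^{(t)}(s)+\eta Q_i(s;\pi^{(t)})\big)$, where $\mathcal P_{\Delta(A_i)}$ is Euclidean projection onto the simplex. *)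

theory Defs
  imports "HOL-Analysis.Analysis"
begin

(* Conventions:
   players: finite type 'i (I = UNIV), states: finite type 's,
   actions: per-player sets A i :: 'a set inside a finite type 'a.
   joint actions: functions a :: 'i => 'a with a i \<in> A i.
   policy profile: pi :: 'i => 's => 'a => real, pi i s = pi_i(s) \<in> \<Delta>(A i).
   transition: P s a s' = P(s'|s,a); payoff: u i s a. *)

definition joint :: "('i \<Rightarrow> 'a set) \<Rightarrow> ('i \<Rightarrow> 'a) set" where
  "joint A = {a. \<forall>i. a i \<in> A i}"

definition prob_simplex :: "'a set \<Rightarrow> ('a \<Rightarrow> real) set" where
  "prob_simplex X = {p. (\<forall>x. 0 \<le> p x) \<and> (\<forall>x. x \<notin> X \<longrightarrow> p x = 0) \<and> sum p X = 1}"

definition valid_policy :: "('i \<Rightarrow> 'a set) \<Rightarrow> 'i \<Rightarrow> ('s \<Rightarrow> 'a \<Rightarrow> real) \<Rightarrow> bool" where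
  "valid_policy A i p \<longleftrightarrow> (\<forall>s. p s \<in> prob_simplex (A i))"

definition valid_profile :: "('i \<Rightarrow> 'a set) \<Rightarrow> ('i \<Rightarrow> 's \<Rightarrow> 'a \<Rightarrow> real) \<Rightarrow> bool" where
  "valid_profile A \<pi> \<longleftrightarrow> (\<forall>i. valid_policy A i (\<pi> i))"

definition joint_prob :: "('i::finite \<Rightarrow> 's \<Rightarrow> 'a \<Rightarrow> real) \<Rightarrow> 's \<Rightarrow> ('i \<Rightarrow> 'a) \<Rightarrow> real" where
  "joint_prob \<pi> s a = (\<Prod>i\<in>UNIV. \<pi> i s (a i))"

fun state_dist :: "('i::finite \<Rightarrow> 'a set) \<Rightarrow> ('s::finite \<Rightarrow> ('i \<Rightarrow> 'a) \<Rightarrow> 's \<Rightarrow> real)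
    \<Rightarrow> ('i \<Rightarrow> 's \<Rightarrow> 'a \<Rightarrow> real) \<Rightarrow> ('s \<Rightarrow> real) \<Rightarrow> nat \<Rightarrow> 's \<Rightarrow> real" where
  "state_dist A P \<pi> \<nu> 0 = \<nu>"
| "state_dist A P \<pi> \<nu> (Suc k) = (\<lambda>s'. \<Sum>s\<in>UNIV. state_dist A P \<pi> \<nu> k s *
      (\<Sum>a\<in>joint A. joint_prob \<pi> s a * P s a s'))"

definition point_dist :: "'s \<Rightarrow> 's \<Rightarrow> real" where
  "point_dist s = (\<lambda>s'. if s' = s then 1 else 0)"

definition value_fn :: "('i::finite \<Rightarrow> 'a set) \<Rightarrow> ('s::finite \<Rightarrow> ('i \<Rightarrow> 'a) \<Rightarrow> 's \<Rightarrow> real)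
    \<Rightarrow> ('i \<Rightarrow> 's \<Rightarrow> ('i \<Rightarrow> 'a) \<Rightarrow> real) \<Rightarrow> real \<Rightarrow> 'i \<Rightarrow> ('s \<Rightarrow> real)
    \<Rightarrow> ('i \<Rightarrow> 's \<Rightarrow> 'a \<Rightarrow> real) \<Rightarrow> real" where
  "value_fn A P u \<delta> i \<nu> \<pi> = (\<Sum>k. \<delta> ^ k * (\<Sum>s\<in>UNIV. state_dist A P \<pi> \<nu> k s *
      (\<Sum>a\<in>joint A. joint_prob \<pi> s a * u i s a)))"

definition visitation :: "('i::finite \<Rightarrow> 'a set) \<Rightarrow> ('s::finite \<Rightarrow> ('i \<Rightarrow> 'a) \<Rightarrow> 's \<Rightarrow> real)
    \<Rightarrow> real \<Rightarrow> ('s \<Rightarrow> real) \<Rightarrow> ('i \<Rightarrow> 's \<Rightarrow> 'a \<Rightarrow> real) \<Rightarrow> 's \<Rightarrow> real" where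
  "visitation A P \<delta> \<nu> \<pi> s = (1 - \<delta>) * (\<Sum>k. \<delta> ^ k * state_dist A P \<pi> \<nu> k s)"

definition Q_fn :: "('i::finite \<Rightarrow> 'a set) \<Rightarrow> ('s::finite \<Rightarrow> ('i \<Rightarrow> 'a) \<Rightarrow> 's \<Rightarrow> real)
    \<Rightarrow> ('i \<Rightarrow> 's \<Rightarrow> ('i \<Rightarrow> 'a) \<Rightarrow> real) \<Rightarrow> real \<Rightarrow> 'i
    \<Rightarrow> ('i \<Rightarrow> 's \<Rightarrow> 'a \<Rightarrow> real) \<Rightarrow> 's \<Rightarrow> 'a \<Rightarrow> real" where
  "Q_fn A P u \<delta> i \<pi> s ai = (\<Sum>a\<in>{a\<in>joint A. a i = ai}.
      (\<Prod>j\<in>UNIV - {i}. \<pi> j s (a j)) *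
      (u i s a + \<delta> * (\<Sum>s'\<in>UNIV. P s a s' * value_fn A P u \<delta> i (point_dist s') \<pi>)))"

definition proj_simplex :: "'a set \<Rightarrow> ('a \<Rightarrow> real) \<Rightarrow> ('a \<Rightarrow> real)" where
  "proj_simplex X y = (THE p. p \<in> prob_simplex X \<and>
      (\<forall>q\<in>prob_simplex X. (\<Sum>x\<in>X. (p x - y x)^2) \<le> (\<Sum>x\<in>X. (q x - y x)^2)))"

fun pga :: "('i::finite \<Rightarrow> 'a set) \<Rightarrow> ('s::finite \<Rightarrow> ('i \<Rightarrow> 'a) \<Rightarrow> 's \<Rightarrow> real)
    \<Rightarrow> ('i \<Rightarrow> 's \<Rightarrow> ('i \<Rightarrow> 'a) \<Rightarrow> real) \<Rightarrow> real \<Rightarrow> real \<Rightarrow> nat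
    \<Rightarrow> ('i \<Rightarrow> 's \<Rightarrow> 'a \<Rightarrow> real)" where
  "pga A P u \<delta> \<eta> 0 = (\<lambda>i s a. if a \<in> A i then 1 / real (card (A i)) else 0)"
| "pga A P u \<delta> \<eta> (Suc t) = (\<lambda>i s. proj_simplex (A i)
      (\<lambda>a. pga A P u \<delta> \<eta> t i s a + \<eta> * Q_fn A P u \<delta> i (pga A P u \<delta> \<eta> t) s a))"

definition is_alpha_potential :: "('i::finite \<Rightarrow> 'a set) \<Rightarrow> ('s::finite \<Rightarrow> ('i \<Rightarrow> 'a) \<Rightarrow> 's \<Rightarrow> real)
    \<Rightarrow> ('i \<Rightarrow> 's \<Rightarrow> ('i \<Rightarrow> 'a) \<Rightarrow> real) \<Rightarrow> real \<Rightarrow> real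
    \<Rightarrow> ('s \<Rightarrow> ('i \<Rightarrow> 's \<Rightarrow> 'a \<Rightarrow> real) \<Rightarrow> real) \<Rightarrow> bool" where
  "is_alpha_potential A P u \<delta> \<alpha> \<Phi> \<longleftrightarrow>
     (\<forall>s i \<pi> \<sigma>. valid_profile A \<pi> \<longrightarrow> valid_policy A i \<sigma> \<longrightarrow>
        \<bar>(\<Phi> s (\<pi>(i := \<sigma>)) - \<Phi> s \<pi>)
          - (value_fn A P u \<delta> i (point_dist s) (\<pi>(i := \<sigma>)) - value_fn A P u \<delta> i (point_dist s) \<pi>)\<bar> \<le> \<alpha>)"

end

theory Submission
  imports Defs
begin

text \<open>
  The projection step satisfies the variational inequality
  \<open>\<parallel>\<pi>\<^sub>i' - \<pi>\<^sub>i\<parallel>\<^sup>2 \<le> \<eta> \<langle>\<pi>\<^sub>i' - \<pi>\<^sub>i, Q\<^sub>i(\<pi>)\<rangle>\<close> in every state. By the performance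
  difference lemma, the inner product integrated against the visitation distribution of the
  profile in which only player \<open>i\<close> has moved is \<open>(1 - \<delta>)\<close> times the value gain of that
  unilateral deviation; the same inequality, with Cauchy-Schwarz, bounds the \<open>\<ell>\<^sub>1\<close>-length of every
  step by \<open>\<eta> |A\<^sub>i| / (1 - \<delta>)\<close>.

  Passing from \<open>\<pi>\<close> to \<open>\<pi>'\<close> one player at a time, each step is such a unilateral
  deviation, but taken from a hybrid profile in which some players have already moved. Its gain
  differs from the gain at \<open>\<pi>\<close> only by a second-order term, of the size of the product of the
  two \<open>\<ell>\<^sub>1\<close>-perturbations, and the \<open>\<alpha>\<close>-potential turns each gain into an increase of
  \<open>\<Phi>\<close> up to \<open>\<alpha>\<close>.
\<close>

lemma summable_suminf_bound_geometric:
  fixes f :: "nat \<Rightarrow> real"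
  assumes d0: "0 \<le> d" and d1: "d < 1" and bound: "\<And>k. \<bar>f k\<bar> \<le> B * d ^ k"
  shows "summable f" "\<bar>suminf f\<bar> \<le> B / (1 - d)"
proof -
  have sg: "summable (\<lambda>k. B * d ^ k)" using d0 d1 by (intro summable_mult summable_geometric) simp
  show sf: "summable f" by (rule summable_comparison_test'[OF sg]) (use bound in auto)
  have "suminf f \<le> (\<Sum>k. B * d ^ k)" by (rule suminf_le) (use bound sf sg in \<open>auto simp: abs_le_iff\<close>)
  moreover have "- (\<Sum>k. B * d ^ k) \<le> suminf f"
    unfolding suminf_minus[OF sg, symmetric]
    by (rule suminf_le) (use bound sf sg in \<open>auto simp: abs_le_iff minus_le_iff intro: summable_minus\<close>)
  moreover have "(\<Sum>k. B * d ^ k) = B / (1 - d)"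
    using d0 d1 by (simp add: suminf_mult suminf_geometric divide_simps)
  ultimately show "\<bar>suminf f\<bar> \<le> B / (1 - d)" by linarith
qed

lemma abs_power_mult_le:
  fixes d x :: real
  assumes "0 \<le> d" "\<bar>x\<bar> \<le> M"
  shows "\<bar>d ^ k * x\<bar> \<le> M * d ^ k"
proof -
  have "\<bar>x\<bar> * d ^ k \<le> M * d ^ k" using assms by (intro mult_right_mono) simp_all
  then show ?thesis using assms(1) by (simp add: abs_mult mult.commute)
qed

lemma abs_sum_mult_le:
  fixes d x :: "'b \<Rightarrow> real"
  assumes "\<And>s. s \<in> S \<Longrightarrow> \<bar>x s\<bar> \<le> M"
  shows "\<bar>\<Sum>s\<in>S. d s * x s\<bar> \<le> (\<Sum>s\<in>S. \<bar>d s\<bar>) * M"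
proof -
  have "\<bar>\<Sum>s\<in>S. d s * x s\<bar> \<le> (\<Sum>s\<in>S. \<bar>d s * x s\<bar>)" by (rule sum_abs)
  also have "\<dots> \<le> (\<Sum>s\<in>S. \<bar>d s\<bar> * M)"
    using assms by (intro sum_mono) (auto simp: abs_mult intro!: mult_left_mono)
  finally show ?thesis by (simp add: sum_distrib_right)
qed

lemma abs_sum_weighted_le:
  fixes w x :: "'b \<Rightarrow> real"
  assumes "\<And>s. s \<in> S \<Longrightarrow> 0 \<le> w s" "\<And>s. s \<in> S \<Longrightarrow> \<bar>x s\<bar> \<le> M"
  shows "\<bar>\<Sum>s\<in>S. w s * x s\<bar> \<le> (\<Sum>s\<in>S. w s) * M"
  using abs_sum_mult_le[of S x M w] assms by simp

lemma sum_abs_squared_le_card: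
  fixes f :: "'b \<Rightarrow> real"
  shows "(\<Sum>x\<in>X. \<bar>f x\<bar>)^2 \<le> real (card X) * (\<Sum>x\<in>X. (f x)^2)"
  using sum_squared_le_sum_of_squares[of "\<lambda>x. \<bar>f x\<bar>" X] by (simp add: mult.commute)

(* In the k-th telescoping term, factor j is taken from f if ch k j and from g otherwise. *)
lemma abs_prod_diff_le_telescoping:
  fixes S :: "'i set"
  assumes "finite S"
  shows "\<exists>ch. \<forall>f g :: 'i \<Rightarrow> real. (\<forall>j. 0 \<le> f j \<and> 0 \<le> g j) \<longrightarrow>
     \<bar>(\<Prod>j\<in>S. f j) - (\<Prod>j\<in>S. g j)\<bar> \<le> (\<Sum>k\<in>S. \<bar>f k - g k\<bar> * (\<Prod>j\<in>S-{k}. if ch k j then f j else g j))"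
  using assms
proof (induction S rule: finite_induct)
  case empty then show ?case by simp
next
  case (insert m S)
  from insert.IH obtain ch where ch: "\<And>f g :: 'i \<Rightarrow> real. (\<forall>j. 0 \<le> f j \<and> 0 \<le> g j) \<Longrightarrow>
     \<bar>(\<Prod>j\<in>S. f j) - (\<Prod>j\<in>S. g j)\<bar> \<le> (\<Sum>k\<in>S. \<bar>f k - g k\<bar> * (\<Prod>j\<in>S-{k}. if ch k j then f j else g j))" by blast
  define ch' where "ch' k j = (k \<noteq> m \<and> (j = m \<or> ch k j))" for k j
  show ?case
  proof (intro exI[of _ ch'] allI impI)
    fix f g :: "'i \<Rightarrow> real" assume nn: "\<forall>j. 0 \<le> f j \<and> 0 \<le> g j"
    have "\<bar>(\<Prod>j\<in>insert m S. f j) - (\<Prod>j\<in>insert m S. g j)\<bar>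
        = \<bar>f m * ((\<Prod>j\<in>S. f j) - (\<Prod>j\<in>S. g j)) + (f m - g m) * (\<Prod>j\<in>S. g j)\<bar>"
      using insert.hyps by (simp add: algebra_simps)
    also have "\<dots> \<le> f m * \<bar>(\<Prod>j\<in>S. f j) - (\<Prod>j\<in>S. g j)\<bar> + \<bar>f m - g m\<bar> * (\<Prod>j\<in>S. g j)"
      using nn by (simp add: abs_mult prod_nonneg abs_triangle_ineq[THEN order_trans])
    also have "\<dots> \<le> f m * (\<Sum>k\<in>S. \<bar>f k - g k\<bar> * (\<Prod>j\<in>S-{k}. if ch k j then f j else g j))
                    + \<bar>f m - g m\<bar> * (\<Prod>j\<in>S. g j)"
      using ch[OF nn] nn by (intro add_right_mono mult_left_mono) auto
    also have "\<dots> = (\<Sum>k\<in>insert m S. \<bar>f k - g k\<bar> * (\<Prod>j\<in>insert m S-{k}. if ch' k j then f j else g j))"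
    proof -
      have head: "(\<Prod>j\<in>insert m S-{m}. if ch' m j then f j else g j) = (\<Prod>j\<in>S. g j)"
        using insert.hyps by (intro prod.cong) (auto simp: ch'_def)
      have tail: "(\<Prod>j\<in>insert m S-{k}. if ch' k j then f j else g j)
                  = f m * (\<Prod>j\<in>S-{k}. if ch k j then f j else g j)" if k: "k \<in> S" for k
      proof -
        have km: "k \<noteq> m" using k insert.hyps by auto
        then have "insert m S - {k} = insert m (S - {k})" by auto
        then have "(\<Prod>j\<in>insert m S-{k}. if ch' k j then f j else g j)
                   = f m * (\<Prod>j\<in>S-{k}. if ch' k j then f j else g j)"
          using insert.hyps km by (simp add: ch'_def)
        also have "(\<Prod>j\<in>S-{k}. if ch' k j then f j else g j) = (\<Prod>j\<in>S-{k}. if ch k j then f j else g j)"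
          using insert.hyps km by (intro prod.cong) (auto simp: ch'_def)
        finally show ?thesis .
      qed
      show ?thesis
        using insert.hyps head tail by (simp add: sum_distrib_left mult_ac)
    qed
    finally show "\<bar>(\<Prod>j\<in>insert m S. f j) - (\<Prod>j\<in>insert m S. g j)\<bar>
        \<le> (\<Sum>k\<in>insert m S. \<bar>f k - g k\<bar> * (\<Prod>j\<in>insert m S-{k}. if ch' k j then f j else g j))" .
  qed
qed

lemma ex_simplex_variational_solution:
  fixes X :: "'a set" and y :: "'a \<Rightarrow> real"
  assumes fin: "finite X" and ne: "X \<noteq> {}"
  shows "\<exists>p. p \<in> prob_simplex X \<and> (\<forall>q\<in>prob_simplex X. (\<Sum>x\<in>X. (y x - p x) * (q x - p x)) \<le> 0)"
proof -
  define g where "g \<theta> = (\<Sum>x\<in>X. max (y x - \<theta>) 0)" for \<theta>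
  have mn: "Min (y ` X) \<le> y x" "y x \<le> Max (y ` X)" if "x \<in> X" for x
    using fin that by auto
  obtain x0 where x0: "x0 \<in> X" using ne by blast
  have "g (Max (y ` X)) = 0" unfolding g_def by (intro sum.neutral) (use mn in auto)
  moreover have "1 \<le> g (Min (y ` X) - 1)"
  proof -
    have "1 \<le> max (y x0 - (Min (y ` X) - 1)) 0" using mn(1)[OF x0] by simp
    also have "\<dots> \<le> g (Min (y ` X) - 1)" unfolding g_def by (rule member_le_sum) (use fin x0 in auto)
    finally show ?thesis .
  qed
  moreover have "continuous_on {Min (y ` X) - 1..Max (y ` X)} g" unfolding g_def by (intro continuous_intros)
  ultimately obtain \<theta> where th: "g \<theta> = 1"
    using IVT2'[of g "Max (y ` X)" 1 "Min (y ` X) - 1"] mn[OF x0] by force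
  (* The projection is soft thresholding at the level \<theta> where the total mass is one. *)
  define p where "p x = (if x \<in> X then max (y x - \<theta>) 0 else 0)" for x
  have psum: "sum p X = 1" using th unfolding g_def p_def by simp
  have "(\<Sum>x\<in>X. (y x - p x) * (q x - p x)) \<le> 0" if q: "q \<in> prob_simplex X" for q
  proof -
    have q0: "\<And>x. 0 \<le> q x" and q1: "sum q X = 1" using q by (auto simp: prob_simplex_def)
    have "(\<Sum>x\<in>X. (y x - p x) * (q x - p x)) = (\<Sum>x\<in>X. (y x - p x) * q x) - (\<Sum>x\<in>X. (y x - p x) * p x)"
      by (simp add: right_diff_distrib sum_subtractf)
    also have "(\<Sum>x\<in>X. (y x - p x) * p x) = (\<Sum>x\<in>X. \<theta> * p x)"
      by (intro sum.cong) (auto simp: p_def max_def)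
    also have "(\<Sum>x\<in>X. (y x - p x) * q x) \<le> (\<Sum>x\<in>X. \<theta> * q x)"
      by (intro sum_mono mult_right_mono q0) (auto simp: p_def)
    finally show ?thesis using psum q1 by (simp add: sum_distrib_left[symmetric])
  qed
  moreover have "p \<in> prob_simplex X" unfolding prob_simplex_def using psum by (auto simp: p_def)
  ultimately show ?thesis by blast
qed

lemma proj_simplex_variational:
  fixes X :: "'a set" and y :: "'a \<Rightarrow> real"
  assumes fin: "finite X" and ne: "X \<noteq> {}"
  shows proj_simplex_in: "proj_simplex X y \<in> prob_simplex X"
    and proj_simplex_inner_le: "\<And>q. q \<in> prob_simplex X \<Longrightarrow>
          (\<Sum>x\<in>X. (y x - proj_simplex X y x) * (q x - proj_simplex X y x)) \<le> 0"
proof -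
  obtain p where p: "p \<in> prob_simplex X"
    and vi: "\<And>q. q \<in> prob_simplex X \<Longrightarrow> (\<Sum>x\<in>X. (y x - p x) * (q x - p x)) \<le> 0"
    using ex_simplex_variational_solution[OF fin ne, of y] by blast
  have expand: "(\<Sum>x\<in>X. (q x - y x)^2)
      = (\<Sum>x\<in>X. (q x - p x)^2) - 2 * (\<Sum>x\<in>X. (y x - p x) * (q x - p x)) + (\<Sum>x\<in>X. (p x - y x)^2)" for q
  proof -
    have "(q x - y x)^2 = (q x - p x)^2 - 2*((y x - p x)*(q x - p x)) + (p x - y x)^2" for x
      by (simp add: power2_eq_square algebra_simps)
    then show ?thesis by (simp only: sum.distrib sum_subtractf sum_distrib_left)
  qed
  have sq_nonneg: "0 \<le> (\<Sum>x\<in>X. (q x - p x)^2)" for q by (intro sum_nonneg) auto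
  have p_min: "\<forall>q\<in>prob_simplex X. (\<Sum>x\<in>X. (p x - y x)^2) \<le> (\<Sum>x\<in>X. (q x - y x)^2)"
    using expand vi sq_nonneg by (smt (verit))
  have "p' = p" if p': "p' \<in> prob_simplex X"
    "\<forall>q\<in>prob_simplex X. (\<Sum>x\<in>X. (p' x - y x)^2) \<le> (\<Sum>x\<in>X. (q x - y x)^2)" for p'
  proof
    fix x
    have "(\<Sum>x\<in>X. (p' x - p x)^2) = 0"
      using expand[of p'] vi[OF p'(1)] p'(2) p sq_nonneg[of p'] by force
    then have "\<forall>x\<in>X. p' x = p x" using fin by (simp add: sum_nonneg_eq_0_iff)
    then show "p' x = p x" using p'(1) p by (cases "x \<in> X") (auto simp: prob_simplex_def)
  qed
  then have "proj_simplex X y = p"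
    unfolding proj_simplex_def using p p_min by (intro the_equality) blast+
  then show "proj_simplex X y \<in> prob_simplex X"
    "\<And>q. q \<in> prob_simplex X \<Longrightarrow> (\<Sum>x\<in>X. (y x - proj_simplex X y x) * (q x - proj_simplex X y x)) \<le> 0"
    using p vi by auto
qed

lemma point_dist_simplex: "point_dist (s :: 's::finite) \<in> prob_simplex UNIV"
  by (simp add: prob_simplex_def point_dist_def sum.delta sum.delta')

lemma sum_point_dist: "(\<Sum>s'\<in>UNIV. point_dist (s :: 's::finite) s' * f s') = (f s :: real)"
proof -
  have "(\<Sum>s'\<in>UNIV. point_dist s s' * f s') = (\<Sum>s'\<in>UNIV. if s' = s then f s' else 0)"
    by (intro sum.cong) (auto simp: point_dist_def)
  then show ?thesis by (simp add: sum.delta sum.delta')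
qed

locale discounted_mdp =
  fixes Act :: "'b set"
    and P :: "'s::finite \<Rightarrow> 'b \<Rightarrow> 's \<Rightarrow> real"
    and \<delta> :: real
  assumes P_nonneg: "\<And>s a s'. a \<in> Act \<Longrightarrow> 0 \<le> P s a s'"
    and P_sum: "\<And>s a. a \<in> Act \<Longrightarrow> (\<Sum>s'\<in>UNIV. P s a s') = 1"
    and \<delta>_nonneg: "0 \<le> \<delta>" and \<delta>_lt1: "\<delta> < 1"
begin

definition stochastic :: "('s \<Rightarrow> 'b \<Rightarrow> real) \<Rightarrow> bool" where
  "stochastic p \<longleftrightarrow> (\<forall>s. p s \<in> prob_simplex Act)"

definition step_prob :: "('s \<Rightarrow> 'b \<Rightarrow> real) \<Rightarrow> 's \<Rightarrow> 's \<Rightarrow> real" where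
  "step_prob p s s' = (\<Sum>a\<in>Act. p s a * P s a s')"

fun state_distr :: "('s \<Rightarrow> 'b \<Rightarrow> real) \<Rightarrow> ('s \<Rightarrow> real) \<Rightarrow> nat \<Rightarrow> 's \<Rightarrow> real" where
  "state_distr p \<nu> 0 = \<nu>"
| "state_distr p \<nu> (Suc k) = (\<lambda>s'. \<Sum>s\<in>UNIV. state_distr p \<nu> k s * step_prob p s s')"

definition exp_reward :: "('s \<Rightarrow> 'b \<Rightarrow> real) \<Rightarrow> ('s \<Rightarrow> 'b \<Rightarrow> real) \<Rightarrow> 's \<Rightarrow> real" where
  "exp_reward R p s = (\<Sum>a\<in>Act. p s a * R s a)"

definition Val :: "('s \<Rightarrow> 'b \<Rightarrow> real) \<Rightarrow> ('s \<Rightarrow> 'b \<Rightarrow> real) \<Rightarrow> ('s \<Rightarrow> real) \<Rightarrow> real" where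
  "Val R p \<nu> = (\<Sum>k. \<delta> ^ k * (\<Sum>s\<in>UNIV. state_distr p \<nu> k s * exp_reward R p s))"

text \<open>The paper's visitation distribution \<open>d\<^sub>\<nu>\<^sup>\<pi>\<close> without its normalising factor \<open>1 - \<delta>\<close>.\<close>
definition occupancy :: "('s \<Rightarrow> 'b \<Rightarrow> real) \<Rightarrow> ('s \<Rightarrow> real) \<Rightarrow> 's \<Rightarrow> real" where
  "occupancy p \<nu> s = (\<Sum>k. \<delta> ^ k * state_distr p \<nu> k s)"

definition Qval :: "('s \<Rightarrow> 'b \<Rightarrow> real) \<Rightarrow> ('s \<Rightarrow> 'b \<Rightarrow> real) \<Rightarrow> 's \<Rightarrow> 'b \<Rightarrow> real" where
  "Qval R p s a = R s a + \<delta> * (\<Sum>s'\<in>UNIV. P s a s' * Val R p (point_dist s'))"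

definition advantage :: "('s \<Rightarrow> 'b \<Rightarrow> real) \<Rightarrow> ('s \<Rightarrow> 'b \<Rightarrow> real) \<Rightarrow> ('s \<Rightarrow> 'b \<Rightarrow> real) \<Rightarrow> 's \<Rightarrow> real" where
  "advantage R p q s = (\<Sum>a\<in>Act. (q s a - p s a) * Qval R p s a)"

lemma stochasticD:
  "stochastic p \<Longrightarrow> 0 \<le> p s a"
  "stochastic p \<Longrightarrow> (\<Sum>a\<in>Act. p s a) = 1"
  by (simp_all add: stochastic_def prob_simplex_def)

lemma step_prob_nonneg: "stochastic p \<Longrightarrow> 0 \<le> step_prob p s s'"
  unfolding step_prob_def using stochasticD(1)[of p] by (auto intro!: sum_nonneg mult_nonneg_nonneg P_nonneg)

lemma sum_step_prob: "stochastic p \<Longrightarrow> (\<Sum>s'\<in>UNIV. step_prob p s s') = 1"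
proof -
  assume p: "stochastic p"
  have "(\<Sum>s'\<in>UNIV. step_prob p s s') = (\<Sum>a\<in>Act. p s a * (\<Sum>s'\<in>UNIV. P s a s'))"
    unfolding step_prob_def by (simp add: sum_distrib_left) (rule sum.swap)
  also have "\<dots> = (\<Sum>a\<in>Act. p s a)" by (intro sum.cong) (auto simp: P_sum)
  finally show ?thesis using p by (simp add: stochasticD)
qed

lemma state_distr_simplex:
  assumes p: "stochastic p" and \<nu>: "\<nu> \<in> prob_simplex UNIV"
  shows "state_distr p \<nu> k \<in> prob_simplex UNIV"
proof (induction k)
  case 0 then show ?case using \<nu> by simp
next
  case (Suc k)
  have "(\<Sum>s'\<in>UNIV. \<Sum>s\<in>UNIV. state_distr p \<nu> k s * step_prob p s s')
      = (\<Sum>s\<in>UNIV. state_distr p \<nu> k s * (\<Sum>s'\<in>UNIV. step_prob p s s'))"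
    by (simp add: sum_distrib_left) (rule sum.swap)
  also have "\<dots> = 1" using Suc p by (simp add: sum_step_prob prob_simplex_def)
  finally show ?case using Suc p
    by (auto simp: prob_simplex_def intro!: sum_nonneg mult_nonneg_nonneg step_prob_nonneg)
qed

lemma state_distr_le_1:
  assumes "stochastic p" "\<nu> \<in> prob_simplex UNIV"
  shows "\<bar>state_distr p \<nu> k s\<bar> \<le> 1"
proof -
  have d: "state_distr p \<nu> k \<in> prob_simplex UNIV" using assms by (rule state_distr_simplex)
  then have "state_distr p \<nu> k s \<le> sum (state_distr p \<nu> k) UNIV"
    by (intro member_le_sum) (auto simp: prob_simplex_def)
  then show ?thesis using d by (simp add: prob_simplex_def)
qed

lemma abs_sum_state_distr_le:
  assumes "stochastic p" "\<nu> \<in> prob_simplex UNIV" "\<And>s. \<bar>r s\<bar> \<le> B"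
  shows "\<bar>\<Sum>s\<in>UNIV. state_distr p \<nu> k s * r s\<bar> \<le> B"
  using abs_sum_weighted_le[of UNIV "state_distr p \<nu> k" r B] state_distr_simplex[OF assms(1,2), of k] assms(3)
  by (simp add: prob_simplex_def)

lemma state_distr_point_average:
  "state_distr p \<nu> k s' = (\<Sum>s0\<in>UNIV. \<nu> s0 * state_distr p (point_dist s0) k s')"
proof (induction k arbitrary: s')
  case 0
  show ?case using sum_point_dist[of s' \<nu>] by (simp add: point_dist_def mult.commute eq_commute)
next
  case (Suc k)
  have "state_distr p \<nu> (Suc k) s'
      = (\<Sum>s\<in>UNIV. (\<Sum>s0\<in>UNIV. \<nu> s0 * state_distr p (point_dist s0) k s) * step_prob p s s')"
    using Suc by simp
  also have "\<dots> = (\<Sum>s0\<in>UNIV. \<nu> s0 * (\<Sum>s\<in>UNIV. state_distr p (point_dist s0) k s * step_prob p s s'))"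
    by (simp add: sum_distrib_left sum_distrib_right mult.assoc) (rule sum.swap)
  finally show ?case by simp
qed

lemma state_distr_point_Suc:
  "state_distr p (point_dist s) (Suc k) s''
     = (\<Sum>s'\<in>UNIV. step_prob p s s' * state_distr p (point_dist s') k s'')"
proof -
  have shift: "state_distr p \<nu> (Suc k) = state_distr p (state_distr p \<nu> 1) k" for \<nu>
    by (induction k) simp_all
  have "state_distr p (point_dist s) 1 = step_prob p s"
    using sum_point_dist[of s] by (auto simp: fun_eq_iff)
  then show ?thesis
    unfolding shift by (simp only: state_distr_point_average[of p "step_prob p s" k s''])
qed


lemma discounted_expectation_bound:
  assumes p: "stochastic p" and \<nu>: "\<nu> \<in> prob_simplex UNIV" and W: "\<And>s. \<bar>W s\<bar> \<le> B"
  shows "summable (\<lambda>k. \<delta> ^ k * (\<Sum>s\<in>UNIV. state_distr p \<nu> k s * W s))"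
    and "\<bar>\<Sum>k. \<delta> ^ k * (\<Sum>s\<in>UNIV. state_distr p \<nu> k s * W s)\<bar> \<le> B / (1 - \<delta>)"
proof -
  have "\<bar>\<delta> ^ k * (\<Sum>s\<in>UNIV. state_distr p \<nu> k s * W s)\<bar> \<le> B * \<delta> ^ k" for k
    using abs_sum_state_distr_le[OF p \<nu> W] by (rule abs_power_mult_le[OF \<delta>_nonneg])
  from summable_suminf_bound_geometric[OF \<delta>_nonneg \<delta>_lt1 this]
  show "summable (\<lambda>k. \<delta> ^ k * (\<Sum>s\<in>UNIV. state_distr p \<nu> k s * W s))"
    and "\<bar>\<Sum>k. \<delta> ^ k * (\<Sum>s\<in>UNIV. state_distr p \<nu> k s * W s)\<bar> \<le> B / (1 - \<delta>)" by blast+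
qed

lemma summable_discounted_expectation:
  "stochastic p \<Longrightarrow> \<nu> \<in> prob_simplex UNIV \<Longrightarrow> summable (\<lambda>k. \<delta> ^ k * (\<Sum>s\<in>UNIV. state_distr p \<nu> k s * W s))"
  by (rule discounted_expectation_bound(1)[of _ _ _ "\<Sum>s\<in>UNIV. \<bar>W s\<bar>"]) (auto intro: member_le_sum)

lemma abs_exp_reward_le:
  "stochastic p \<Longrightarrow> (\<And>s a. a \<in> Act \<Longrightarrow> \<bar>R s a\<bar> \<le> B) \<Longrightarrow> \<bar>exp_reward R p s\<bar> \<le> B"
  unfolding exp_reward_def using abs_sum_weighted_le[of Act "p s" "R s" B] by (simp add: stochasticD)

lemma abs_Val_le:
  "stochastic p \<Longrightarrow> \<nu> \<in> prob_simplex UNIV \<Longrightarrow> (\<And>s a. a \<in> Act \<Longrightarrow> \<bar>R s a\<bar> \<le> B)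
     \<Longrightarrow> \<bar>Val R p \<nu>\<bar> \<le> B / (1 - \<delta>)"
  unfolding Val_def by (intro discounted_expectation_bound(2) abs_exp_reward_le)

lemma Val_point_average:
  assumes p: "stochastic p"
  shows "Val R p \<nu> = (\<Sum>s0\<in>UNIV. \<nu> s0 * Val R p (point_dist s0))"
proof -
  define f where "f s0 k = \<delta> ^ k * (\<Sum>s\<in>UNIV. state_distr p (point_dist s0) k s * exp_reward R p s)" for s0 k
  have f: "summable (f s0)" for s0 unfolding f_def by (rule summable_discounted_expectation[OF p point_dist_simplex])
  have "\<delta> ^ k * (\<Sum>s\<in>UNIV. state_distr p \<nu> k s * exp_reward R p s) = (\<Sum>s0\<in>UNIV. \<nu> s0 * f s0 k)" for k
  proof -
    have "(\<Sum>s\<in>UNIV. state_distr p \<nu> k s * exp_reward R p s)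
        = (\<Sum>s\<in>UNIV. \<Sum>s0\<in>UNIV. \<nu> s0 * (state_distr p (point_dist s0) k s * exp_reward R p s))"
      by (subst state_distr_point_average) (simp add: sum_distrib_right mult.assoc)
    then show ?thesis
      unfolding f_def by (subst (asm) sum.swap) (simp add: sum_distrib_left mult.left_commute)
  qed
  then have "Val R p \<nu> = (\<Sum>k. \<Sum>s0\<in>UNIV. \<nu> s0 * f s0 k)" unfolding Val_def by simp
  also have "\<dots> = (\<Sum>s0\<in>UNIV. \<Sum>k. \<nu> s0 * f s0 k)" by (rule suminf_sum) (intro summable_mult f)
  also have "\<dots> = (\<Sum>s0\<in>UNIV. \<nu> s0 * Val R p (point_dist s0))"
    unfolding Val_def f_def[symmetric] by (intro sum.cong refl suminf_mult f)
  finally show ?thesis .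
qed

lemma Val_Bellman:
  assumes p: "stochastic p"
  shows "Val R p (point_dist s) = exp_reward R p s + \<delta> * (\<Sum>s'\<in>UNIV. step_prob p s s' * Val R p (point_dist s'))"
proof -
  define f where "f s k = \<delta> ^ k * (\<Sum>x\<in>UNIV. state_distr p (point_dist s) k x * exp_reward R p x)" for s k
  have f: "summable (f s)" for s unfolding f_def by (rule summable_discounted_expectation[OF p point_dist_simplex])
  have f0: "f s 0 = exp_reward R p s" unfolding f_def by (simp add: sum_point_dist)
  have fSuc: "f s (Suc k) = (\<Sum>s'\<in>UNIV. \<delta> * step_prob p s s' * f s' k)" for k
  proof -
    have "(\<Sum>x\<in>UNIV. state_distr p (point_dist s) (Suc k) x * exp_reward R p x)
        = (\<Sum>x\<in>UNIV. \<Sum>s'\<in>UNIV. step_prob p s s' * (state_distr p (point_dist s') k x * exp_reward R p x))"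
      by (subst state_distr_point_Suc) (simp add: sum_distrib_right mult.assoc)
    then show ?thesis
      unfolding f_def by (subst (asm) sum.swap) (simp add: sum_distrib_left mult_ac)
  qed
  have "Val R p (point_dist s) = f s 0 + (\<Sum>k. f s (Suc k))"
    unfolding Val_def f_def[symmetric] using suminf_split_head[OF f] by simp
  also have "(\<Sum>k. f s (Suc k)) = (\<Sum>s'\<in>UNIV. \<Sum>k. \<delta> * step_prob p s s' * f s' k)"
    unfolding fSuc by (rule suminf_sum) (intro summable_mult f)
  also have "\<dots> = (\<Sum>s'\<in>UNIV. \<delta> * step_prob p s s' * Val R p (point_dist s'))"
    unfolding Val_def f_def[symmetric] by (intro sum.cong refl suminf_mult f)
  finally show ?thesis using f0 by (simp add: sum_distrib_left mult.assoc)
qed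

lemma sum_Qval:
  "(\<Sum>a\<in>Act. q s a * Qval R p s a)
     = exp_reward R q s + \<delta> * (\<Sum>s'\<in>UNIV. step_prob q s s' * Val R p (point_dist s'))"
proof -
  have "(\<Sum>a\<in>Act. q s a * Qval R p s a)
      = exp_reward R q s + \<delta> * (\<Sum>a\<in>Act. \<Sum>s'\<in>UNIV. q s a * P s a s' * Val R p (point_dist s'))"
    unfolding Qval_def exp_reward_def by (simp add: algebra_simps sum.distrib sum_distrib_left)
  also have "(\<Sum>a\<in>Act. \<Sum>s'\<in>UNIV. q s a * P s a s' * Val R p (point_dist s'))
      = (\<Sum>s'\<in>UNIV. step_prob q s s' * Val R p (point_dist s'))"
    unfolding step_prob_def by (subst sum.swap) (simp add: sum_distrib_right)
  finally show ?thesis .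
qed

lemma Val_eq_sum_Qval: "stochastic p \<Longrightarrow> Val R p (point_dist s) = (\<Sum>a\<in>Act. p s a * Qval R p s a)"
  using Val_Bellman sum_Qval by metis

lemma occupancy_summable:
  "stochastic p \<Longrightarrow> \<nu> \<in> prob_simplex UNIV \<Longrightarrow> summable (\<lambda>k. \<delta> ^ k * state_distr p \<nu> k s)"
  by (rule summable_suminf_bound_geometric(1)[of \<delta> _ 1])
     (use \<delta>_nonneg \<delta>_lt1 state_distr_le_1 in \<open>auto simp: abs_mult intro: mult_left_le\<close>)

lemma occupancy_nonneg: "stochastic p \<Longrightarrow> \<nu> \<in> prob_simplex UNIV \<Longrightarrow> 0 \<le> occupancy p \<nu> s"
  unfolding occupancy_def using state_distr_simplex[of p \<nu>] \<delta>_nonneg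
  by (intro suminf_nonneg occupancy_summable) (auto simp: prob_simplex_def)

lemma sum_occupancy:
  assumes "stochastic p" "\<nu> \<in> prob_simplex UNIV"
  shows "(\<Sum>s\<in>UNIV. occupancy p \<nu> s) = 1 / (1 - \<delta>)"
proof -
  have "(\<Sum>s\<in>UNIV. occupancy p \<nu> s) = (\<Sum>k. \<Sum>s\<in>UNIV. \<delta> ^ k * state_distr p \<nu> k s)"
    unfolding occupancy_def by (rule suminf_sum[symmetric]) (rule occupancy_summable[OF assms])
  also have "\<dots> = (\<Sum>k. \<delta> ^ k)"
    using state_distr_simplex[OF assms] by (simp add: sum_distrib_left[symmetric] prob_simplex_def)
  also have "\<dots> = 1 / (1 - \<delta>)" using \<delta>_nonneg \<delta>_lt1 by (simp add: suminf_geometric)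
  finally show ?thesis .
qed

lemma discounted_expectation_eq_occupancy:
  assumes p: "stochastic p" and \<nu>: "\<nu> \<in> prob_simplex UNIV"
  shows "(\<Sum>k. \<delta> ^ k * (\<Sum>s\<in>UNIV. state_distr p \<nu> k s * g s)) = (\<Sum>s\<in>UNIV. occupancy p \<nu> s * g s)"
proof -
  have "(\<Sum>k. \<delta> ^ k * (\<Sum>s\<in>UNIV. state_distr p \<nu> k s * g s)) = (\<Sum>k. \<Sum>s\<in>UNIV. \<delta> ^ k * state_distr p \<nu> k s * g s)"
    by (simp add: sum_distrib_left mult.assoc)
  also have "\<dots> = (\<Sum>s\<in>UNIV. \<Sum>k. \<delta> ^ k * state_distr p \<nu> k s * g s)"
    by (rule suminf_sum) (intro summable_mult2 occupancy_summable[OF p \<nu>])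
  also have "\<dots> = (\<Sum>s\<in>UNIV. occupancy p \<nu> s * g s)"
    unfolding occupancy_def by (intro sum.cong refl suminf_mult2[symmetric] occupancy_summable[OF p \<nu>])
  finally show ?thesis .
qed

lemma Val_state_reward:
  assumes p: "stochastic p" and \<nu>: "\<nu> \<in> prob_simplex UNIV"
  shows "Val (\<lambda>s a. h s) p \<nu> = (\<Sum>s\<in>UNIV. occupancy p \<nu> s * h s)"
proof -
  have "exp_reward (\<lambda>s a. h s) p = h"
    using p by (simp add: fun_eq_iff exp_reward_def stochasticD sum_distrib_right[symmetric])
  then show ?thesis unfolding Val_def by (simp add: discounted_expectation_eq_occupancy[OF p \<nu>])
qed

lemma sum_state_distr_step_prob:
  "(\<Sum>s\<in>UNIV. state_distr q \<nu> k s * (\<Sum>s'\<in>UNIV. step_prob q s s' * W s'))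
     = (\<Sum>s'\<in>UNIV. state_distr q \<nu> (Suc k) s' * W s')"
  by (simp add: sum_distrib_left sum_distrib_right mult.assoc) (rule sum.swap)

lemma Val_telescoping:
  assumes q: "stochastic q" and \<nu>: "\<nu> \<in> prob_simplex UNIV"
  shows "Val R q \<nu> = (\<Sum>s\<in>UNIV. \<nu> s * W s)
    + (\<Sum>s\<in>UNIV. occupancy q \<nu> s * (exp_reward R q s + \<delta> * (\<Sum>s'\<in>UNIV. step_prob q s s' * W s') - W s))"
proof -
  define g where "g s = exp_reward R q s + \<delta> * (\<Sum>s'\<in>UNIV. step_prob q s s' * W s') - W s" for s
  define x where "x k = \<delta> ^ k * (\<Sum>s\<in>UNIV. state_distr q \<nu> k s * exp_reward R q s)" for k
  define b where "b k = \<delta> ^ k * (\<Sum>s\<in>UNIV. state_distr q \<nu> k s * W s)" for k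
  have sum_g: "(\<Sum>s\<in>UNIV. state_distr q \<nu> k s * g s)
      = (\<Sum>s\<in>UNIV. state_distr q \<nu> k s * exp_reward R q s)
        + \<delta> * (\<Sum>s\<in>UNIV. state_distr q \<nu> k s * (\<Sum>s'\<in>UNIV. step_prob q s s' * W s'))
        - (\<Sum>s\<in>UNIV. state_distr q \<nu> k s * W s)" for k
    unfolding g_def by (simp only: algebra_simps sum.distrib sum_subtractf flip: sum_distrib_left)
  have step: "\<delta> ^ k * (\<Sum>s\<in>UNIV. state_distr q \<nu> k s * g s) = x k + (b (Suc k) - b k)" for k
    unfolding x_def b_def power_Suc sum_g sum_state_distr_step_prob by (simp add: algebra_simps)
  have "summable b" unfolding b_def by (rule summable_discounted_expectation[OF q \<nu>])
  then have "(\<lambda>k. b (Suc k) - b k) sums (0 - b 0)" by (intro telescope_sums summable_LIMSEQ_zero)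
  moreover have "x sums Val R q \<nu>"
    unfolding x_def Val_def by (rule summable_sums[OF summable_discounted_expectation[OF q \<nu>]])
  ultimately have "(\<lambda>k. \<delta> ^ k * (\<Sum>s\<in>UNIV. state_distr q \<nu> k s * g s)) sums (Val R q \<nu> - b 0)"
    unfolding step using sums_add by fastforce
  then show ?thesis
    unfolding sums_iff discounted_expectation_eq_occupancy[OF q \<nu>] g_def b_def by simp
qed

theorem performance_difference:
  assumes p: "stochastic p" and q: "stochastic q" and \<nu>: "\<nu> \<in> prob_simplex UNIV"
  shows "Val R q \<nu> - Val R p \<nu> = (\<Sum>s\<in>UNIV. occupancy q \<nu> s * advantage R p q s)"
proof -
  have "advantage R p q s
      = exp_reward R q s + \<delta> * (\<Sum>s'\<in>UNIV. step_prob q s s' * Val R p (point_dist s')) - Val R p (point_dist s)" for s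
    using sum_Qval[of q s R p] Val_eq_sum_Qval[OF p, of R s]
    by (simp add: advantage_def left_diff_distrib sum_subtractf)
  then show ?thesis
    using Val_telescoping[OF q \<nu>, of R "\<lambda>s. Val R p (point_dist s)"] Val_point_average[OF p, of R \<nu>] by simp
qed

lemma abs_Qval_le:
  assumes p: "stochastic p" and B: "\<And>s a. a \<in> Act \<Longrightarrow> \<bar>R s a\<bar> \<le> B" and a: "a \<in> Act"
  shows "\<bar>Qval R p s a\<bar> \<le> B / (1 - \<delta>)"
proof -
  define X where "X = (\<Sum>s'\<in>UNIV. P s a s' * Val R p (point_dist s'))"
  have "\<bar>X\<bar> \<le> (\<Sum>s'\<in>UNIV. P s a s') * (B / (1 - \<delta>))"
    unfolding X_def
    by (rule abs_sum_weighted_le) (use a P_nonneg abs_Val_le[OF p point_dist_simplex B] in auto)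
  then have "\<delta> * \<bar>X\<bar> \<le> \<delta> * (B / (1 - \<delta>))"
    using P_sum[OF a] \<delta>_nonneg by (intro mult_left_mono) auto
  moreover have "\<bar>Qval R p s a\<bar> \<le> \<bar>R s a\<bar> + \<bar>\<delta> * X\<bar>"
    unfolding Qval_def X_def by (rule abs_triangle_ineq)
  ultimately have "\<bar>Qval R p s a\<bar> \<le> B + \<delta> * (B / (1 - \<delta>))"
    using B[OF a, of s] \<delta>_nonneg by (simp add: abs_mult)
  also have "\<dots> = B / (1 - \<delta>)" using \<delta>_lt1 by (simp add: field_simps)
  finally show ?thesis .
qed

lemma abs_advantage_le:
  assumes p: "stochastic p" and B: "\<And>s a. a \<in> Act \<Longrightarrow> \<bar>R s a\<bar> \<le> B"
  shows "\<bar>advantage R p q s\<bar> \<le> (\<Sum>a\<in>Act. \<bar>q s a - p s a\<bar>) * (B / (1 - \<delta>))"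
  unfolding advantage_def by (rule abs_sum_mult_le) (use abs_Qval_le[OF p B] in auto)

lemma abs_Val_diff_le:
  assumes p: "stochastic p" and q: "stochastic q" and \<nu>: "\<nu> \<in> prob_simplex UNIV"
    and B: "\<And>s a. a \<in> Act \<Longrightarrow> \<bar>R s a\<bar> \<le> B" and B0: "0 \<le> B"
    and c: "\<And>s. (\<Sum>a\<in>Act. \<bar>q s a - p s a\<bar>) \<le> c"
  shows "\<bar>Val R q \<nu> - Val R p \<nu>\<bar> \<le> c * B / (1 - \<delta>)^2"
proof -
  have "\<bar>advantage R p q s\<bar> \<le> c * (B / (1 - \<delta>))" for s
  proof -
    have "(\<Sum>a\<in>Act. \<bar>q s a - p s a\<bar>) * (B / (1 - \<delta>)) \<le> c * (B / (1 - \<delta>))"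
      using c B0 \<delta>_lt1 by (intro mult_right_mono) auto
    moreover have "\<bar>advantage R p q s\<bar> \<le> (\<Sum>a\<in>Act. \<bar>q s a - p s a\<bar>) * (B / (1 - \<delta>))"
      using p B by (rule abs_advantage_le)
    ultimately show ?thesis by linarith
  qed
  then have "\<bar>Val R q \<nu> - Val R p \<nu>\<bar> \<le> (\<Sum>s\<in>UNIV. occupancy q \<nu> s) * (c * (B / (1 - \<delta>)))"
    unfolding performance_difference[OF p q \<nu>]
    by (intro abs_sum_weighted_le occupancy_nonneg[OF q \<nu>])
  also have "\<dots> = c * B / (1 - \<delta>)^2" unfolding sum_occupancy[OF q \<nu>] by (simp add: power2_eq_square)
  finally show ?thesis .
qed

lemma abs_Qval_diff_le:
  assumes p: "stochastic p" and q: "stochastic q"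
    and B: "\<And>s a. a \<in> Act \<Longrightarrow> \<bar>R s a\<bar> \<le> B" and B0: "0 \<le> B"
    and c: "\<And>s. (\<Sum>a\<in>Act. \<bar>q s a - p s a\<bar>) \<le> c" and a: "a \<in> Act"
  shows "\<bar>Qval R q s a - Qval R p s a\<bar> \<le> c * B / (1 - \<delta>)^2"
proof -
  have c0: "0 \<le> c" using c[of s] by (meson order.trans sum_nonneg abs_ge_zero)
  have "\<bar>\<Sum>s'\<in>UNIV. P s a s' * (Val R q (point_dist s') - Val R p (point_dist s'))\<bar>
      \<le> (\<Sum>s'\<in>UNIV. P s a s') * (c * B / (1 - \<delta>)^2)"
    by (rule abs_sum_weighted_le)
       (use a P_nonneg abs_Val_diff_le[OF p q point_dist_simplex B B0 c] in auto)
  then have "\<delta> * \<bar>\<Sum>s'\<in>UNIV. P s a s' * (Val R q (point_dist s') - Val R p (point_dist s'))\<bar>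
      \<le> \<delta> * (c * B / (1 - \<delta>)^2)"
    using P_sum[OF a] \<delta>_nonneg by (intro mult_left_mono) auto
  moreover have "Qval R q s a - Qval R p s a
      = \<delta> * (\<Sum>s'\<in>UNIV. P s a s' * (Val R q (point_dist s') - Val R p (point_dist s')))"
    unfolding Qval_def by (simp add: algebra_simps sum_subtractf)
  ultimately have "\<bar>Qval R q s a - Qval R p s a\<bar> \<le> \<delta> * (c * B / (1 - \<delta>)^2)"
    using \<delta>_nonneg by (simp add: abs_mult)
  also have "\<dots> \<le> c * B / (1 - \<delta>)^2"
    using c0 B0 \<delta>_lt1 \<delta>_nonneg by (intro mult_left_le_one_le) auto
  finally show ?thesis .
qed

lemma abs_advantage_diff_le:
  assumes p0: "stochastic p0" and p1: "stochastic p1"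
    and B: "\<And>s a. a \<in> Act \<Longrightarrow> \<bar>R s a\<bar> \<le> B" and B0: "0 \<le> B"
    and q1p1: "(\<Sum>a\<in>Act. \<bar>q1 s a - p1 s a\<bar>) \<le> e"
    and p1p0: "\<And>s. (\<Sum>a\<in>Act. \<bar>p1 s a - p0 s a\<bar>) \<le> c"
    and mixed: "(\<Sum>a\<in>Act. \<bar>(q1 s a - p1 s a) - (q0 s a - p0 s a)\<bar>) \<le> e * c"
  shows "\<bar>advantage R p1 q1 s - advantage R p0 q0 s\<bar> \<le> 2 * c * e * B / (1 - \<delta>)^2"
proof -
  have c0: "0 \<le> c" using p1p0[of s] by (meson order.trans sum_nonneg abs_ge_zero)
  have e0: "0 \<le> e" using q1p1 by (meson order.trans sum_nonneg abs_ge_zero)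
  have "\<bar>\<Sum>a\<in>Act. (q1 s a - p1 s a) * (Qval R p1 s a - Qval R p0 s a)\<bar>
      \<le> (\<Sum>a\<in>Act. \<bar>q1 s a - p1 s a\<bar>) * (c * B / (1 - \<delta>)^2)"
    by (rule abs_sum_mult_le) (use abs_Qval_diff_le[OF p0 p1 B B0 p1p0] in auto)
  also have "\<dots> \<le> e * (c * B / (1 - \<delta>)^2)" using q1p1 c0 B0 by (intro mult_right_mono) auto
  finally have first: "\<bar>\<Sum>a\<in>Act. (q1 s a - p1 s a) * (Qval R p1 s a - Qval R p0 s a)\<bar>
      \<le> e * (c * B / (1 - \<delta>)^2)" .
  have "\<bar>\<Sum>a\<in>Act. ((q1 s a - p1 s a) - (q0 s a - p0 s a)) * Qval R p0 s a\<bar>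
      \<le> (\<Sum>a\<in>Act. \<bar>(q1 s a - p1 s a) - (q0 s a - p0 s a)\<bar>) * (B / (1 - \<delta>))"
    by (rule abs_sum_mult_le) (use abs_Qval_le[OF p0 B] in auto)
  also have "\<dots> \<le> (e * c) * (B / (1 - \<delta>))" using mixed B0 \<delta>_lt1 by (intro mult_right_mono) auto
  also have "\<dots> \<le> (e * c) * (B / (1 - \<delta>)^2)"
  proof (intro mult_left_mono divide_left_mono)
    show "(1 - \<delta>)^2 \<le> 1 - \<delta>" using \<delta>_nonneg \<delta>_lt1 by (simp add: power2_eq_square mult_le_cancel_left1)
  qed (use e0 c0 B0 \<delta>_lt1 in auto)
  finally have second: "\<bar>\<Sum>a\<in>Act. ((q1 s a - p1 s a) - (q0 s a - p0 s a)) * Qval R p0 s a\<bar>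
      \<le> (e * c) * (B / (1 - \<delta>)^2)" .
  have "advantage R p1 q1 s - advantage R p0 q0 s
      = (\<Sum>a\<in>Act. (q1 s a - p1 s a) * (Qval R p1 s a - Qval R p0 s a))
        + (\<Sum>a\<in>Act. ((q1 s a - p1 s a) - (q0 s a - p0 s a)) * Qval R p0 s a)"
    unfolding advantage_def by (simp add: algebra_simps sum.distrib sum_subtractf)
  then have "\<bar>advantage R p1 q1 s - advantage R p0 q0 s\<bar>
      \<le> e * (c * B / (1 - \<delta>)^2) + (e * c) * (B / (1 - \<delta>)^2)"
    using first second abs_triangle_ineq by (smt (verit))
  also have "\<dots> = 2 * c * e * B / (1 - \<delta>)^2" by (simp add: field_simps)
  finally show ?thesis .
qed

lemma abs_sum_occupancy_diff_le:
  assumes p: "stochastic p" and q: "stochastic q" and \<nu>: "\<nu> \<in> prob_simplex UNIV"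
    and h: "\<And>s. \<bar>h s\<bar> \<le> M" and c: "\<And>s. (\<Sum>a\<in>Act. \<bar>q s a - p s a\<bar>) \<le> c"
  shows "\<bar>(\<Sum>s\<in>UNIV. occupancy q \<nu> s * h s) - (\<Sum>s\<in>UNIV. occupancy p \<nu> s * h s)\<bar> \<le> c * M / (1 - \<delta>)^2"
proof -
  have "0 \<le> M" using h by (meson abs_ge_zero order.trans)
  with h c show ?thesis
    using abs_Val_diff_le[OF p q \<nu>, of "\<lambda>s a. h s" M c]
    unfolding Val_state_reward[OF q \<nu>] Val_state_reward[OF p \<nu>] by simp
qed

text \<open>Both gains are expanded by the performance difference lemma; the two expansions then differ
  through the occupancy measure and through the advantages, each perturbed by \<open>c\<close>.\<close>
lemma abs_Val_second_diff_le:
  assumes p0: "stochastic p0" and p1: "stochastic p1" and q0: "stochastic q0" and q1: "stochastic q1"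
    and \<nu>: "\<nu> \<in> prob_simplex UNIV"
    and B: "\<And>s a. a \<in> Act \<Longrightarrow> \<bar>R s a\<bar> \<le> B" and B0: "0 \<le> B"
    and q1p1: "\<And>s. (\<Sum>a\<in>Act. \<bar>q1 s a - p1 s a\<bar>) \<le> e"
    and p1p0: "\<And>s. (\<Sum>a\<in>Act. \<bar>p1 s a - p0 s a\<bar>) \<le> c"
    and q1q0: "\<And>s. (\<Sum>a\<in>Act. \<bar>q1 s a - q0 s a\<bar>) \<le> c"
    and mixed: "\<And>s. (\<Sum>a\<in>Act. \<bar>(q1 s a - p1 s a) - (q0 s a - p0 s a)\<bar>) \<le> e * c"
  shows "\<bar>(Val R q1 \<nu> - Val R p1 \<nu>) - (Val R q0 \<nu> - Val R p0 \<nu>)\<bar> \<le> 3 * c * e * B / (1 - \<delta>)^3"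
proof -
  define h1 where "h1 = advantage R p1 q1"
  define h0 where "h0 = advantage R p0 q0"
  have "\<bar>h1 s\<bar> \<le> e * B / (1 - \<delta>)" for s
  proof -
    have "\<bar>h1 s\<bar> \<le> (\<Sum>a\<in>Act. \<bar>q1 s a - p1 s a\<bar>) * (B / (1 - \<delta>))"
      unfolding h1_def using p1 B by (rule abs_advantage_le)
    also have "\<dots> \<le> e * (B / (1 - \<delta>))" using q1p1 B0 \<delta>_lt1 by (intro mult_right_mono) auto
    finally show ?thesis by simp
  qed
  from abs_sum_occupancy_diff_le[OF q0 q1 \<nu> this q1q0]
  have occupancy_change: "\<bar>(\<Sum>s\<in>UNIV. occupancy q1 \<nu> s * h1 s) - (\<Sum>s\<in>UNIV. occupancy q0 \<nu> s * h1 s)\<bar>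
      \<le> c * e * B / (1 - \<delta>)^3"
    by (simp add: power3_eq_cube power2_eq_square mult.assoc)
  have "\<bar>\<Sum>s\<in>UNIV. occupancy q0 \<nu> s * (h1 s - h0 s)\<bar>
      \<le> (\<Sum>s\<in>UNIV. occupancy q0 \<nu> s) * (2 * c * e * B / (1 - \<delta>)^2)"
    unfolding h1_def h0_def
    by (intro abs_sum_weighted_le occupancy_nonneg[OF q0 \<nu>] abs_advantage_diff_le[OF p0 p1 B B0 q1p1 p1p0 mixed])
  then have advantage_change: "\<bar>\<Sum>s\<in>UNIV. occupancy q0 \<nu> s * (h1 s - h0 s)\<bar> \<le> 2 * c * e * B / (1 - \<delta>)^3"
    unfolding sum_occupancy[OF q0 \<nu>] by (simp add: power3_eq_cube power2_eq_square mult.assoc)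
  have "(Val R q1 \<nu> - Val R p1 \<nu>) - (Val R q0 \<nu> - Val R p0 \<nu>)
      = ((\<Sum>s\<in>UNIV. occupancy q1 \<nu> s * h1 s) - (\<Sum>s\<in>UNIV. occupancy q0 \<nu> s * h1 s))
        + (\<Sum>s\<in>UNIV. occupancy q0 \<nu> s * (h1 s - h0 s))"
    unfolding performance_difference[OF p1 q1 \<nu>] performance_difference[OF p0 q0 \<nu>] h1_def h0_def
    by (simp add: right_diff_distrib sum_subtractf)
  then have "\<bar>(Val R q1 \<nu> - Val R p1 \<nu>) - (Val R q0 \<nu> - Val R p0 \<nu>)\<bar>
      \<le> c * e * B / (1 - \<delta>)^3 + 2 * c * e * B / (1 - \<delta>)^3"
    using occupancy_change advantage_change abs_triangle_ineq by (smt (verit))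
  also have "\<dots> = 3 * c * e * B / (1 - \<delta>)^3" by (simp add: field_simps)
  finally show ?thesis .
qed

end

lemma joint_eq_PiE: "joint A = PiE UNIV A"
  by (auto simp: joint_def PiE_def Pi_def)

lemma sum_joint_prod:
  fixes w :: "'i::finite \<Rightarrow> 'a::finite \<Rightarrow> real"
  shows "(\<Sum>a\<in>joint A. \<Prod>j\<in>UNIV. w j (a j)) = (\<Prod>j\<in>UNIV. \<Sum>b\<in>A j. w j b)"
  unfolding joint_eq_PiE by (rule prod_sum_PiE[symmetric]) auto

lemma sum_joint_prod_eq_prod_subset:
  fixes w :: "'i::finite \<Rightarrow> 'a::finite \<Rightarrow> real"
  assumes "\<And>j. j \<notin> K \<Longrightarrow> (\<Sum>b\<in>A j. w j b) = 1"
  shows "(\<Sum>a\<in>joint A. \<Prod>j\<in>UNIV. w j (a j)) = (\<Prod>j\<in>K. \<Sum>b\<in>A j. w j b)"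
  unfolding sum_joint_prod using assms by (intro prod.mono_neutral_right) auto

lemma valid_profileD:
  "valid_profile A \<rho> \<Longrightarrow> 0 \<le> \<rho> j s b"
  "valid_profile A \<rho> \<Longrightarrow> (\<Sum>b\<in>A j. \<rho> j s b) = 1"
  "valid_profile A \<rho> \<Longrightarrow> b \<notin> A j \<Longrightarrow> \<rho> j s b = 0"
  by (simp_all add: valid_profile_def valid_policy_def prob_simplex_def)

lemma valid_profile_upd: "valid_profile A \<rho> \<Longrightarrow> valid_policy A i y \<Longrightarrow> valid_profile A (\<rho>(i := y))"
  by (auto simp: valid_profile_def)

lemma joint_prob_simplex:
  fixes \<rho> :: "'i::finite \<Rightarrow> 's \<Rightarrow> 'a::finite \<Rightarrow> real"
  assumes \<rho>: "valid_profile A \<rho>"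
  shows "joint_prob \<rho> s \<in> prob_simplex (joint A)"
proof -
  have "joint_prob \<rho> s a = 0" if a: "a \<notin> joint A" for a
  proof -
    obtain j where "a j \<notin> A j" using a by (auto simp: joint_def)
    then show ?thesis unfolding joint_prob_def using valid_profileD(3)[OF \<rho>] by (intro prod_zero) auto
  qed
  moreover have "sum (joint_prob \<rho> s) (joint A) = 1"
    unfolding joint_prob_def sum_joint_prod[of "\<lambda>j b. \<rho> j s b"] using valid_profileD(2)[OF \<rho>] by simp
  ultimately show ?thesis
    unfolding prob_simplex_def joint_prob_def using valid_profileD(1)[OF \<rho>] by (auto intro: prod_nonneg)
qed

lemma joint_prob_upd:
  "joint_prob (\<rho>(i := y)) s a = y s (a i) * (\<Prod>j\<in>UNIV-{i}. \<rho> j s (a j))"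
proof -
  have "joint_prob (\<rho>(i := y)) s a = y s (a i) * (\<Prod>j\<in>UNIV-{i}. (\<rho>(i := y)) j s (a j))"
    unfolding joint_prob_def by (subst prod.remove[of _ i]) auto
  also have "(\<Prod>j\<in>UNIV-{i}. (\<rho>(i := y)) j s (a j)) = (\<Prod>j\<in>UNIV-{i}. \<rho> j s (a j))"
    by (intro prod.cong) auto
  finally show ?thesis .
qed

lemma joint_prob_split:
  "joint_prob \<rho> s a = \<rho> i s (a i) * (\<Prod>j\<in>UNIV-{i}. \<rho> j s (a j))"
  using joint_prob_upd[of \<rho> i "\<rho> i" s a] by simp

lemma sum_abs_joint_prob_diff_le:
  fixes \<rho> \<rho>' :: "'i::finite \<Rightarrow> 's \<Rightarrow> 'a::finite \<Rightarrow> real"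
  assumes \<rho>: "valid_profile A \<rho>" and \<rho>': "valid_profile A \<rho>'"
  shows "(\<Sum>a\<in>joint A. \<bar>joint_prob \<rho> s a - joint_prob \<rho>' s a\<bar>) \<le> (\<Sum>k\<in>UNIV. \<Sum>b\<in>A k. \<bar>\<rho> k s b - \<rho>' k s b\<bar>)"
proof -
  obtain ch where ch: "\<And>f g :: 'i \<Rightarrow> real. (\<forall>j. 0 \<le> f j \<and> 0 \<le> g j) \<Longrightarrow>
     \<bar>(\<Prod>j\<in>UNIV. f j) - (\<Prod>j\<in>UNIV. g j)\<bar> \<le> (\<Sum>k\<in>UNIV. \<bar>f k - g k\<bar> * (\<Prod>j\<in>UNIV-{k}. if ch k j then f j else g j))"
    using abs_prod_diff_le_telescoping[of "UNIV :: 'i set"] by auto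
  define w where "w k j b = (if j = k then \<bar>\<rho> k s b - \<rho>' k s b\<bar> else if ch k j then \<rho> j s b else \<rho>' j s b)" for k j b
  have sum_choice: "(\<Sum>b\<in>A j. if c then \<rho> j s b else \<rho>' j s b) = 1" for j c
    by (cases c) (simp_all add: valid_profileD(2)[OF \<rho>] valid_profileD(2)[OF \<rho>'])
  have "\<bar>joint_prob \<rho> s a - joint_prob \<rho>' s a\<bar> \<le> (\<Sum>k\<in>UNIV. \<Prod>j\<in>UNIV. w k j (a j))" for a
  proof -
    have "\<bar>joint_prob \<rho> s a - joint_prob \<rho>' s a\<bar>
        \<le> (\<Sum>k\<in>UNIV. \<bar>\<rho> k s (a k) - \<rho>' k s (a k)\<bar> * (\<Prod>j\<in>UNIV-{k}. if ch k j then \<rho> j s (a j) else \<rho>' j s (a j)))"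
      unfolding joint_prob_def by (rule ch) (use valid_profileD(1)[OF \<rho>] valid_profileD(1)[OF \<rho>'] in auto)
    also have "\<dots> = (\<Sum>k\<in>UNIV. \<Prod>j\<in>UNIV. w k j (a j))"
      by (intro sum.cong refl, subst prod.remove[of UNIV]) (auto simp: w_def intro!: prod.cong)
    finally show ?thesis .
  qed
  then have "(\<Sum>a\<in>joint A. \<bar>joint_prob \<rho> s a - joint_prob \<rho>' s a\<bar>) \<le> (\<Sum>a\<in>joint A. \<Sum>k\<in>UNIV. \<Prod>j\<in>UNIV. w k j (a j))"
    by (intro sum_mono)
  also have "\<dots> = (\<Sum>k\<in>UNIV. \<Sum>a\<in>joint A. \<Prod>j\<in>UNIV. w k j (a j))" by (rule sum.swap)
  also have "\<dots> = (\<Sum>k\<in>UNIV. \<Sum>b\<in>A k. \<bar>\<rho> k s b - \<rho>' k s b\<bar>)"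
  proof (intro sum.cong refl)
    fix k
    have "(\<Sum>a\<in>joint A. \<Prod>j\<in>UNIV. w k j (a j)) = (\<Prod>j\<in>{k}. \<Sum>b\<in>A j. w k j b)"
      by (rule sum_joint_prod_eq_prod_subset)
         (auto simp: w_def sum_choice)
    then show "(\<Sum>a\<in>joint A. \<Prod>j\<in>UNIV. w k j (a j)) = (\<Sum>b\<in>A k. \<bar>\<rho> k s b - \<rho>' k s b\<bar>)"
      by (simp add: w_def)
  qed
  finally show ?thesis .
qed

text \<open>The interaction term of a unilateral deviation of player \<open>i\<close> with a perturbation of the
  other players is of second order. Normalising \<open>\<bar>y - \<pi> i\<bar>\<close> to a policy of player \<open>i\<close> reduces
  it to the first-order bound.\<close>
lemma sum_abs_joint_prob_mixed_diff_le:
  fixes \<pi> H :: "'i::finite \<Rightarrow> 's \<Rightarrow> 'a::finite \<Rightarrow> real"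
  assumes \<pi>: "valid_profile A \<pi>" and H: "valid_profile A H" and Hi: "H i = \<pi> i"
  shows "(\<Sum>a\<in>joint A. \<bar>(joint_prob (H(i := y)) s a - joint_prob H s a) - (joint_prob (\<pi>(i := y)) s a - joint_prob \<pi> s a)\<bar>)
    \<le> (\<Sum>b\<in>A i. \<bar>y s b - \<pi> i s b\<bar>) * (\<Sum>k\<in>UNIV. \<Sum>b\<in>A k. \<bar>H k s b - \<pi> k s b\<bar>)"
proof -
  define v where "v b = y s b - \<pi> i s b" for b
  define Z where "Z = (\<Sum>b\<in>A i. \<bar>v b\<bar>)"
  define others where "others \<rho> a = (\<Prod>j\<in>UNIV-{i}. \<rho> j s (a j))" for \<rho> :: "'i \<Rightarrow> 's \<Rightarrow> 'a \<Rightarrow> real" and a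
  have decomp: "(joint_prob (H(i := y)) s a - joint_prob H s a) - (joint_prob (\<pi>(i := y)) s a - joint_prob \<pi> s a)
      = v (a i) * (others H a - others \<pi> a)" for a
    unfolding v_def others_def joint_prob_upd joint_prob_split[of H s a i] joint_prob_split[of \<pi> s a i] Hi
    by (simp add: algebra_simps)
  have "(\<Sum>a\<in>joint A. \<bar>v (a i)\<bar> * \<bar>others H a - others \<pi> a\<bar>) \<le> Z * (\<Sum>k\<in>UNIV. \<Sum>b\<in>A k. \<bar>H k s b - \<pi> k s b\<bar>)"
  proof (cases "Z = 0")
    case True
    then have "v b = 0" if "b \<in> A i" for b using that by (simp add: Z_def sum_nonneg_eq_0_iff)
    then have "(\<Sum>a\<in>joint A. \<bar>v (a i)\<bar> * \<bar>others H a - others \<pi> a\<bar>) = 0"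
      by (intro sum.neutral) (auto simp: joint_def)
    then show ?thesis using True by simp
  next
    case False
    then have Z: "0 < Z" unfolding Z_def by (simp add: order_le_neq_trans sum_nonneg)
    define q where "q s' b = (if b \<in> A i then \<bar>v b\<bar> / Z else 0)" for s' :: 's and b
    have q: "valid_policy A i q"
      using Z by (simp add: valid_policy_def prob_simplex_def q_def Z_def sum_divide_distrib[symmetric])
    have "\<bar>v (a i)\<bar> * \<bar>others H a - others \<pi> a\<bar> = Z * \<bar>joint_prob (H(i := q)) s a - joint_prob (\<pi>(i := q)) s a\<bar>"
      if "a \<in> joint A" for a
    proof -
      have "joint_prob (H(i := q)) s a - joint_prob (\<pi>(i := q)) s a = \<bar>v (a i)\<bar> / Z * (others H a - others \<pi> a)"
        using that unfolding joint_prob_upd others_def q_def by (simp add: joint_def algebra_simps)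
      then show ?thesis using Z by (simp add: abs_mult)
    qed
    then have "(\<Sum>a\<in>joint A. \<bar>v (a i)\<bar> * \<bar>others H a - others \<pi> a\<bar>)
        = Z * (\<Sum>a\<in>joint A. \<bar>joint_prob (H(i := q)) s a - joint_prob (\<pi>(i := q)) s a\<bar>)"
      by (simp add: sum_distrib_left)
    also have "\<dots> \<le> Z * (\<Sum>k\<in>UNIV. \<Sum>b\<in>A k. \<bar>(H(i := q)) k s b - (\<pi>(i := q)) k s b\<bar>)"
      using Z by (intro mult_left_mono sum_abs_joint_prob_diff_le valid_profile_upd H \<pi> q) auto
    also have "\<dots> \<le> Z * (\<Sum>k\<in>UNIV. \<Sum>b\<in>A k. \<bar>H k s b - \<pi> k s b\<bar>)"
      using Z by (intro mult_left_mono sum_mono) auto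
    finally show ?thesis .
  qed
  then show ?thesis unfolding decomp abs_mult Z_def v_def .
qed

lemma sum_abs_upd_diff:
  fixes \<rho> :: "'i::finite \<Rightarrow> 's \<Rightarrow> 'a \<Rightarrow> real"
  shows "(\<Sum>k\<in>UNIV. \<Sum>b\<in>A k. \<bar>(\<rho>(i := y)) k s b - \<rho> k s b\<bar>) = (\<Sum>b\<in>A i. \<bar>y s b - \<rho> i s b\<bar>)"
  by (subst sum.remove[of UNIV i]) (auto intro!: sum.neutral)

locale markov_game = discounted_mdp "joint A" P \<delta>
  for A :: "'i::finite \<Rightarrow> 'a::finite set" and P :: "'s::finite \<Rightarrow> ('i \<Rightarrow> 'a) \<Rightarrow> 's \<Rightarrow> real"
    and \<delta> :: real +
  fixes u :: "'i \<Rightarrow> 's \<Rightarrow> ('i \<Rightarrow> 'a) \<Rightarrow> real"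
  assumes A_nonempty: "\<And>i. A i \<noteq> {}"
    and u_range: "\<And>i s a. a \<in> joint A \<Longrightarrow> 0 \<le> u i s a \<and> u i s a \<le> 1"
begin

lemma abs_u_le_1: "a \<in> joint A \<Longrightarrow> \<bar>u i s a\<bar> \<le> 1"
  using u_range[of a i s] by auto

lemma stochastic_joint_prob: "valid_profile A \<rho> \<Longrightarrow> stochastic (joint_prob \<rho>)"
  by (simp add: stochastic_def joint_prob_simplex)

lemma state_dist_eq: "state_dist A P \<rho> \<nu> k = state_distr (joint_prob \<rho>) \<nu> k"
  by (induction k) (simp_all add: step_prob_def)

lemma value_fn_eq_Val: "value_fn A P u \<delta> i \<nu> \<rho> = Val (u i) (joint_prob \<rho>) \<nu>"
  unfolding value_fn_def Val_def exp_reward_def state_dist_eq ..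

lemma visitation_eq: "visitation A P \<delta> \<nu> \<rho> s = (1 - \<delta>) * occupancy (joint_prob \<rho>) \<nu> s"
  unfolding visitation_def occupancy_def state_dist_eq ..

lemma value_fn_point_average:
  "valid_profile A \<rho> \<Longrightarrow> value_fn A P u \<delta> i \<nu> \<rho> = (\<Sum>s\<in>UNIV. \<nu> s * value_fn A P u \<delta> i (point_dist s) \<rho>)"
  unfolding value_fn_eq_Val by (rule Val_point_average[OF stochastic_joint_prob])

text \<open>In the inner product of a deviation of player \<open>i\<close> with \<open>Q\<^sub>i\<close>, the other players'
  actions are averaged out exactly as in the advantage of the joint deviation.\<close>
lemma sum_Q_fn_eq_advantage:
  "(\<Sum>x\<in>A i. (y s x - \<rho> i s x) * Q_fn A P u \<delta> i \<rho> s x)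
     = advantage (u i) (joint_prob \<rho>) (joint_prob (\<rho>(i := y))) s"
proof -
  define F where "F a = (y s (a i) - \<rho> i s (a i))
      * ((\<Prod>j\<in>UNIV - {i}. \<rho> j s (a j)) * Qval (u i) (joint_prob \<rho>) s a)" for a
  have "(\<Sum>x\<in>A i. (y s x - \<rho> i s x) * Q_fn A P u \<delta> i \<rho> s x) = (\<Sum>x\<in>A i. \<Sum>a\<in>{a\<in>joint A. a i = x}. F a)"
    unfolding Q_fn_def Qval_def value_fn_eq_Val sum_distrib_left F_def by (intro sum.cong refl) auto
  also have "\<dots> = (\<Sum>a\<in>joint A. F a)" by (rule sum.group) (auto simp: joint_def)
  also have "\<dots> = advantage (u i) (joint_prob \<rho>) (joint_prob (\<rho>(i := y))) s"
    unfolding advantage_def F_def joint_prob_upd joint_prob_split[of \<rho> s _ i]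
    by (intro sum.cong refl) (simp add: algebra_simps)
  finally show ?thesis .
qed

lemma sum_abs_joint_prob_upd_le:
  assumes \<rho>: "valid_profile A \<rho>" and y: "valid_policy A i y"
  shows "(\<Sum>a\<in>joint A. \<bar>joint_prob (\<rho>(i := y)) s a - joint_prob \<rho> s a\<bar>) \<le> (\<Sum>b\<in>A i. \<bar>y s b - \<rho> i s b\<bar>)"
  using sum_abs_joint_prob_diff_le[OF valid_profile_upd[OF \<rho> y] \<rho>, of s] sum_abs_upd_diff[where A=A and \<rho>=\<rho> and i=i and y=y and s=s]
  by simp

lemma abs_advantage_upd_le:
  assumes \<rho>: "valid_profile A \<rho>" and y: "valid_policy A i y"
  shows "\<bar>advantage (u i) (joint_prob \<rho>) (joint_prob (\<rho>(i := y))) s\<bar> \<le> (\<Sum>b\<in>A i. \<bar>y s b - \<rho> i s b\<bar>) / (1 - \<delta>)"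
proof -
  have "\<bar>advantage (u i) (joint_prob \<rho>) (joint_prob (\<rho>(i := y))) s\<bar>
      \<le> (\<Sum>a\<in>joint A. \<bar>joint_prob (\<rho>(i := y)) s a - joint_prob \<rho> s a\<bar>) * (1 / (1 - \<delta>))"
    by (rule abs_advantage_le[OF stochastic_joint_prob[OF \<rho>]]) (rule abs_u_le_1)
  also have "\<dots> \<le> (\<Sum>b\<in>A i. \<bar>y s b - \<rho> i s b\<bar>) * (1 / (1 - \<delta>))"
    using sum_abs_joint_prob_upd_le[OF \<rho> y] \<delta>_lt1 by (intro mult_right_mono) auto
  finally show ?thesis by simp
qed

lemma unilateral_gain_perturbation:
  assumes \<pi>: "valid_profile A \<pi>" and H: "valid_profile A H" and y: "valid_policy A i y"
    and Hi: "H i = \<pi> i" and \<nu>: "\<nu> \<in> prob_simplex UNIV"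
    and e: "\<And>s. (\<Sum>b\<in>A i. \<bar>y s b - \<pi> i s b\<bar>) \<le> e"
    and c: "\<And>s. (\<Sum>k\<in>UNIV. \<Sum>b\<in>A k. \<bar>H k s b - \<pi> k s b\<bar>) \<le> c"
  shows "\<bar>(value_fn A P u \<delta> i \<nu> (H(i := y)) - value_fn A P u \<delta> i \<nu> H)
          - (value_fn A P u \<delta> i \<nu> (\<pi>(i := y)) - value_fn A P u \<delta> i \<nu> \<pi>)\<bar> \<le> 3 * c * e / (1 - \<delta>)^3"
proof -
  have e0: "0 \<le> e" using e by (meson order.trans sum_nonneg abs_ge_zero)
  have q1q0: "(\<Sum>k\<in>UNIV. \<Sum>b\<in>A k. \<bar>(H(i := y)) k s b - (\<pi>(i := y)) k s b\<bar>) \<le> c" for s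
    using c[of s] order.trans sum_mono by (smt (verit) abs_ge_zero fun_upd_apply sum_nonneg)
  have mixed: "(\<Sum>a\<in>joint A. \<bar>(joint_prob (H(i := y)) s a - joint_prob H s a)
      - (joint_prob (\<pi>(i := y)) s a - joint_prob \<pi> s a)\<bar>) \<le> e * c" for s
    using sum_abs_joint_prob_mixed_diff_le[OF \<pi> H Hi, of y s] e[of s] c[of s] e0
    by (meson order.trans mult_mono sum_nonneg abs_ge_zero)
  have "\<bar>(Val (u i) (joint_prob (H(i := y))) \<nu> - Val (u i) (joint_prob H) \<nu>)
      - (Val (u i) (joint_prob (\<pi>(i := y))) \<nu> - Val (u i) (joint_prob \<pi>) \<nu>)\<bar> \<le> 3 * c * e * 1 / (1 - \<delta>)^3"
  proof (rule abs_Val_second_diff_le[OF stochastic_joint_prob[OF \<pi>] stochastic_joint_prob[OF H]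
        stochastic_joint_prob[OF valid_profile_upd[OF \<pi> y]] stochastic_joint_prob[OF valid_profile_upd[OF H y]]
        \<nu> abs_u_le_1 _ _ _ _ mixed])
    fix s
    show "(\<Sum>a\<in>joint A. \<bar>joint_prob (H(i := y)) s a - joint_prob H s a\<bar>) \<le> e"
      using sum_abs_joint_prob_upd_le[OF H y, of s] e[of s] Hi by simp
    show "(\<Sum>a\<in>joint A. \<bar>joint_prob H s a - joint_prob \<pi> s a\<bar>) \<le> c"
      using sum_abs_joint_prob_diff_le[OF H \<pi>, of s] c[of s] by simp
    show "(\<Sum>a\<in>joint A. \<bar>joint_prob (H(i := y)) s a - joint_prob (\<pi>(i := y)) s a\<bar>) \<le> c"
      using sum_abs_joint_prob_diff_le[OF valid_profile_upd[OF H y] valid_profile_upd[OF \<pi> y], of s] q1q0[of s]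
      by simp
  qed auto
  then show ?thesis unfolding value_fn_eq_Val by simp
qed

definition pga_step :: "real \<Rightarrow> ('i \<Rightarrow> 's \<Rightarrow> 'a \<Rightarrow> real) \<Rightarrow> 'i \<Rightarrow> 's \<Rightarrow> 'a \<Rightarrow> real" where
  "pga_step \<eta> \<pi> = (\<lambda>i s. proj_simplex (A i) (\<lambda>a. \<pi> i s a + \<eta> * Q_fn A P u \<delta> i \<pi> s a))"

lemma pga_Suc: "pga A P u \<delta> \<eta> (Suc t) = pga_step \<eta> (pga A P u \<delta> \<eta> t)"
  by (simp add: pga_step_def)

lemma valid_pga_step: "valid_profile A (pga_step \<eta> \<pi>)"
  unfolding valid_profile_def valid_policy_def pga_step_def using proj_simplex_in[OF finite A_nonempty] by simp

lemma valid_pga: "valid_profile A (pga A P u \<delta> \<eta> t)"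
proof (cases t)
  case 0
  have "card (A i) > 0" for i using A_nonempty[of i] by (simp add: card_gt_0_iff)
  then show ?thesis using 0 A_nonempty by (simp add: valid_profile_def valid_policy_def prob_simplex_def)
next
  case (Suc t')
  then show ?thesis by (simp only: pga_Suc valid_pga_step)
qed

lemma alpha_potential_nonneg:
  assumes "is_alpha_potential A P u \<delta> \<alpha> \<Phi>"
  shows "0 \<le> \<alpha>"
proof -
  let ?\<pi> = "pga A P u \<delta> 1 0"
  have "valid_policy A i (?\<pi> i)" for i using valid_pga[of 1 0] by (simp only: valid_profile_def)
  then have "\<bar>(\<Phi> s (?\<pi>(i := ?\<pi> i)) - \<Phi> s ?\<pi>)
      - (value_fn A P u \<delta> i (point_dist s) (?\<pi>(i := ?\<pi> i)) - value_fn A P u \<delta> i (point_dist s) ?\<pi>)\<bar> \<le> \<alpha>"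
    for s i using assms valid_pga unfolding is_alpha_potential_def by blast
  from this[of undefined undefined] show ?thesis by (simp only: fun_upd_triv)
qed

text \<open>The variational inequality of the projection, tested against the old policy.\<close>
lemma sum_sq_pga_step_le:
  assumes \<pi>: "valid_profile A \<pi>"
  shows "(\<Sum>a\<in>A i. (pga_step \<eta> \<pi> i s a - \<pi> i s a)^2)
           \<le> \<eta> * advantage (u i) (joint_prob \<pi>) (joint_prob (\<pi>(i := pga_step \<eta> \<pi> i))) s"
proof -
  define y where "y a = \<pi> i s a + \<eta> * Q_fn A P u \<delta> i \<pi> s a" for a
  have step: "pga_step \<eta> \<pi> i s = proj_simplex (A i) y" unfolding pga_step_def y_def ..
  have "\<pi> i s \<in> prob_simplex (A i)" using \<pi> by (simp add: valid_profile_def valid_policy_def)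
  then have "(\<Sum>a\<in>A i. (y a - pga_step \<eta> \<pi> i s a) * (\<pi> i s a - pga_step \<eta> \<pi> i s a)) \<le> 0"
    unfolding step by (rule proj_simplex_inner_le[OF finite A_nonempty])
  moreover have "(\<Sum>a\<in>A i. (y a - pga_step \<eta> \<pi> i s a) * (\<pi> i s a - pga_step \<eta> \<pi> i s a))
      = (\<Sum>a\<in>A i. (pga_step \<eta> \<pi> i s a - \<pi> i s a)^2)
        - \<eta> * (\<Sum>a\<in>A i. (pga_step \<eta> \<pi> i s a - \<pi> i s a) * Q_fn A P u \<delta> i \<pi> s a)"
    unfolding y_def by (simp add: power2_eq_square algebra_simps sum.distrib sum_subtractf sum_distrib_left)
  ultimately show ?thesis unfolding sum_Q_fn_eq_advantage by simp
qed

lemma sum_abs_pga_step_le: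
  assumes \<pi>: "valid_profile A \<pi>" and \<eta>: "0 < \<eta>"
  shows "(\<Sum>a\<in>A i. \<bar>pga_step \<eta> \<pi> i s a - \<pi> i s a\<bar>) \<le> \<eta> * real (card (A i)) / (1 - \<delta>)"
proof -
  define l where "l = (\<Sum>a\<in>A i. \<bar>pga_step \<eta> \<pi> i s a - \<pi> i s a\<bar>)"
  define adv where "adv = advantage (u i) (joint_prob \<pi>) (joint_prob (\<pi>(i := pga_step \<eta> \<pi> i))) s"
  have y: "valid_policy A i (pga_step \<eta> \<pi> i)" using valid_pga_step by (simp add: valid_profile_def)
  have "(\<Sum>a\<in>A i. (pga_step \<eta> \<pi> i s a - \<pi> i s a)^2) \<le> \<eta> * adv"
    unfolding adv_def by (rule sum_sq_pga_step_le[OF \<pi>])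
  also have "\<eta> * adv \<le> \<eta> * (l / (1 - \<delta>))"
    using abs_advantage_upd_le[OF \<pi> y, of s] \<eta> unfolding adv_def l_def by (intro mult_left_mono) auto
  finally have "real (card (A i)) * (\<Sum>a\<in>A i. (pga_step \<eta> \<pi> i s a - \<pi> i s a)^2)
      \<le> real (card (A i)) * (\<eta> * (l / (1 - \<delta>)))" by (rule mult_left_mono) simp
  with sum_abs_squared_le_card[of "\<lambda>a. pga_step \<eta> \<pi> i s a - \<pi> i s a" "A i"]
  have "l * l \<le> (\<eta> * real (card (A i)) / (1 - \<delta>)) * l"
    unfolding l_def[symmetric] by (simp add: power2_eq_square field_simps)
  moreover have "0 \<le> l" unfolding l_def by (auto intro: sum_nonneg)
  ultimately show ?thesis unfolding l_def[symmetric]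
    using \<eta> \<delta>_lt1 by (cases "l = 0") (auto intro: mult_right_le_imp_le)
qed

lemma value_gain_pga_step_ge:
  assumes \<pi>: "valid_profile A \<pi>" and \<nu>: "\<nu> \<in> prob_simplex UNIV" and \<eta>: "0 < \<eta>"
  shows "value_fn A P u \<delta> i \<nu> (\<pi>(i := pga_step \<eta> \<pi> i)) - value_fn A P u \<delta> i \<nu> \<pi>
    \<ge> 1 / (\<eta> * (1 - \<delta>)) * (\<Sum>s\<in>UNIV. visitation A P \<delta> \<nu> (\<pi>(i := pga_step \<eta> \<pi> i)) s
          * (\<Sum>a\<in>A i. (pga_step \<eta> \<pi> i s a - \<pi> i s a)^2))"
proof -
  let ?\<pi>' = "\<pi>(i := pga_step \<eta> \<pi> i)"
  define dsq where "dsq s = (\<Sum>a\<in>A i. (pga_step \<eta> \<pi> i s a - \<pi> i s a)^2)" for s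
  have q: "stochastic (joint_prob ?\<pi>')"
    using valid_pga_step by (intro stochastic_joint_prob valid_profile_upd[OF \<pi>]) (simp add: valid_profile_def)
  have "(\<Sum>s\<in>UNIV. occupancy (joint_prob ?\<pi>') \<nu> s * (dsq s / \<eta>))
      \<le> (\<Sum>s\<in>UNIV. occupancy (joint_prob ?\<pi>') \<nu> s * advantage (u i) (joint_prob \<pi>) (joint_prob ?\<pi>') s)"
    using sum_sq_pga_step_le[OF \<pi>] \<eta> unfolding dsq_def
    by (intro sum_mono mult_left_mono occupancy_nonneg[OF q \<nu>]) (simp add: divide_le_eq mult.commute)
  also have "\<dots> = value_fn A P u \<delta> i \<nu> ?\<pi>' - value_fn A P u \<delta> i \<nu> \<pi>"
    unfolding value_fn_eq_Val by (rule performance_difference[OF stochastic_joint_prob[OF \<pi>] q \<nu>, symmetric])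
  also have "(\<Sum>s\<in>UNIV. occupancy (joint_prob ?\<pi>') \<nu> s * (dsq s / \<eta>))
      = 1 / (\<eta> * (1 - \<delta>)) * (\<Sum>s\<in>UNIV. visitation A P \<delta> \<nu> ?\<pi>' s * dsq s)"
    unfolding visitation_eq sum_distrib_left using \<delta>_lt1 \<eta> by (intro sum.cong refl) (simp add: field_simps)
  finally show ?thesis by (simp only: dsq_def)
qed

definition max_actions :: real where
  "max_actions = real (Max ((\<lambda>i. card (A i)) ` UNIV))"

lemma card_le_max_actions: "real (card (A i)) \<le> max_actions"
  unfolding max_actions_def by simp

lemma hybrid_gain_pga_step_ge:
  assumes \<pi>: "valid_profile A \<pi>" and \<nu>: "\<nu> \<in> prob_simplex UNIV" and \<eta>: "0 < \<eta>"
    and Hi: "H i = \<pi> i" and H: "\<forall>k. H k = \<pi> k \<or> H k = pga_step \<eta> \<pi> k"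
  defines "e \<equiv> \<eta> * max_actions / (1 - \<delta>)"
  shows "1 / (\<eta> * (1 - \<delta>)) * (\<Sum>s\<in>UNIV. visitation A P \<delta> \<nu> (\<pi>(i := pga_step \<eta> \<pi> i)) s
            * (\<Sum>a\<in>A i. (pga_step \<eta> \<pi> i s a - \<pi> i s a)^2))
          - 3 * (real CARD('i) * e) * e / (1 - \<delta>)^3
      \<le> value_fn A P u \<delta> i \<nu> (H(i := pga_step \<eta> \<pi> i)) - value_fn A P u \<delta> i \<nu> H"
proof -
  have step_le_e: "(\<Sum>b\<in>A k. \<bar>pga_step \<eta> \<pi> k s b - \<pi> k s b\<bar>) \<le> e" for k s
  proof -
    have "\<eta> * real (card (A k)) / (1 - \<delta>) \<le> e"
      unfolding e_def using card_le_max_actions[of k] \<eta> \<delta>_lt1 by (intro divide_right_mono mult_left_mono) auto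
    then show ?thesis using sum_abs_pga_step_le[OF \<pi> \<eta>, of k s] by linarith
  qed
  have e0: "0 \<le> e" unfolding e_def max_actions_def using \<eta> \<delta>_lt1 by simp
  have "(\<Sum>b\<in>A k. \<bar>H k s b - \<pi> k s b\<bar>) \<le> e" for k s
    using H[rule_format, of k] step_le_e[of k s] e0 by auto
  then have "(\<Sum>k\<in>UNIV. \<Sum>b\<in>A k. \<bar>H k s b - \<pi> k s b\<bar>) \<le> (\<Sum>k\<in>(UNIV :: 'i set). e)" for s
    by (intro sum_mono)
  then have others: "(\<Sum>k\<in>UNIV. \<Sum>b\<in>A k. \<bar>H k s b - \<pi> k s b\<bar>) \<le> real CARD('i) * e" for s by simp
  have H_valid: "valid_profile A H" using \<pi> valid_pga_step H by (simp add: valid_profile_def) metis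
  have y: "valid_policy A i (pga_step \<eta> \<pi> i)" using valid_pga_step by (simp add: valid_profile_def)
  have "\<bar>(value_fn A P u \<delta> i \<nu> (H(i := pga_step \<eta> \<pi> i)) - value_fn A P u \<delta> i \<nu> H)
      - (value_fn A P u \<delta> i \<nu> (\<pi>(i := pga_step \<eta> \<pi> i)) - value_fn A P u \<delta> i \<nu> \<pi>)\<bar>
      \<le> 3 * (real CARD('i) * e) * e / (1 - \<delta>)^3"
    using step_le_e others by (intro unilateral_gain_perturbation[OF \<pi> H_valid y Hi \<nu>])
  then show ?thesis using value_gain_pga_step_ge[OF \<pi> \<nu> \<eta>, of i] by linarith
qed

lemma potential_unilateral_ge:
  assumes pot: "is_alpha_potential A P u \<delta> \<alpha> \<Phi>" and \<nu>: "\<nu> \<in> prob_simplex UNIV"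
    and \<rho>: "valid_profile A \<rho>" and \<sigma>: "valid_policy A i \<sigma>"
  shows "value_fn A P u \<delta> i \<nu> (\<rho>(i := \<sigma>)) - value_fn A P u \<delta> i \<nu> \<rho> - \<alpha>
    \<le> (\<Sum>s\<in>UNIV. \<nu> s * \<Phi> s (\<rho>(i := \<sigma>))) - (\<Sum>s\<in>UNIV. \<nu> s * \<Phi> s \<rho>)"
proof -
  have "value_fn A P u \<delta> i (point_dist s) (\<rho>(i := \<sigma>)) - value_fn A P u \<delta> i (point_dist s) \<rho> - \<alpha>
      \<le> \<Phi> s (\<rho>(i := \<sigma>)) - \<Phi> s \<rho>" for s
    using pot \<rho> \<sigma> unfolding is_alpha_potential_def abs_le_iff by (smt (verit))
  then have "(\<Sum>s\<in>UNIV. \<nu> s * (value_fn A P u \<delta> i (point_dist s) (\<rho>(i := \<sigma>))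
        - value_fn A P u \<delta> i (point_dist s) \<rho> - \<alpha>))
      \<le> (\<Sum>s\<in>UNIV. \<nu> s * (\<Phi> s (\<rho>(i := \<sigma>)) - \<Phi> s \<rho>))"
    using \<nu> by (intro sum_mono mult_left_mono) (auto simp: prob_simplex_def)
  moreover have "sum \<nu> UNIV = 1" using \<nu> by (simp add: prob_simplex_def)
  ultimately show ?thesis
    using value_fn_point_average[OF valid_profile_upd[OF \<rho> \<sigma>], of i \<nu>] value_fn_point_average[OF \<rho>, of i \<nu>]
    by (simp add: right_diff_distrib sum_subtractf sum_distrib_right[symmetric])
qed

lemma potential_gain_ge_sum:
  assumes pot: "is_alpha_potential A P u \<delta> \<alpha> \<Phi>" and \<nu>: "\<nu> \<in> prob_simplex UNIV"
    and \<pi>: "valid_profile A \<pi>" and \<pi>': "valid_profile A \<pi>'"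
    and gain: "\<And>i H. H i = \<pi> i \<Longrightarrow> \<forall>k. H k = \<pi> k \<or> H k = \<pi>' k \<Longrightarrow>
        X i \<le> value_fn A P u \<delta> i \<nu> (H(i := \<pi>' i)) - value_fn A P u \<delta> i \<nu> H"
  shows "(\<Sum>i\<in>UNIV. X i) - real CARD('i) * \<alpha>
    \<le> (\<Sum>s\<in>UNIV. \<nu> s * \<Phi> s \<pi>') - (\<Sum>s\<in>UNIV. \<nu> s * \<Phi> s \<pi>)"
proof -
  define N where "N = CARD('i)"
  define \<Phi>\<nu> where "\<Phi>\<nu> \<rho> = (\<Sum>s\<in>UNIV. \<nu> s * \<Phi> s \<rho>)" for \<rho>
  obtain f where f: "bij_betw f {..<N} (UNIV :: 'i set)"
    using ex_bij_betw_nat_finite[of "UNIV :: 'i set"] unfolding N_def atLeast0LessThan by auto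
  define H where "H m = (\<lambda>j. if j \<in> f ` {..<m} then \<pi>' j else \<pi> j)" for m
  have H_Suc: "H (Suc m) = (H m)(f m := \<pi>' (f m))" for m unfolding H_def by (auto simp: lessThan_Suc)
  have H_fm: "H m (f m) = \<pi> (f m)" if "m < N" for m
  proof -
    have "f m \<notin> f ` {..<m}" using bij_betw_imp_inj_on[OF f] that
      by (auto simp: inj_on_def) (metis lessThan_iff less_irrefl order.strict_trans)
    then show ?thesis unfolding H_def by simp
  qed
  have H_choice: "\<forall>k. H m k = \<pi> k \<or> H m k = \<pi>' k" for m unfolding H_def by auto
  have H_valid: "valid_profile A (H m)" for m
    using \<pi> \<pi>' H_choice[of m] by (simp add: valid_profile_def) metis
  have \<pi>'_policy: "valid_policy A k (\<pi>' k)" for k using \<pi>' by (simp add: valid_profile_def)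
  have "X (f m) - \<alpha> \<le> \<Phi>\<nu> (H (Suc m)) - \<Phi>\<nu> (H m)" if m: "m < N" for m
  proof -
    have "X (f m) \<le> value_fn A P u \<delta> (f m) \<nu> ((H m)(f m := \<pi>' (f m))) - value_fn A P u \<delta> (f m) \<nu> (H m)"
      using H_fm[OF m] H_choice by (rule gain)
    then show ?thesis
      using potential_unilateral_ge[OF pot \<nu> H_valid[of m] \<pi>'_policy[of "f m"]] unfolding H_Suc \<Phi>\<nu>_def by linarith
  qed
  then have "(\<Sum>m<N. X (f m) - \<alpha>) \<le> (\<Sum>m<N. \<Phi>\<nu> (H (Suc m)) - \<Phi>\<nu> (H m))" by (intro sum_mono) simp
  also have "\<dots> = \<Phi>\<nu> \<pi>' - \<Phi>\<nu> \<pi>"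
    using bij_betw_imp_surj_on[OF f] by (subst sum_lessThan_telescope) (simp add: H_def)
  also have "(\<Sum>m<N. X (f m) - \<alpha>) = (\<Sum>i\<in>UNIV. X i) - real N * \<alpha>"
    using sum.reindex_bij_betw[OF f, of X] by (simp add: sum_subtractf)
  finally show ?thesis unfolding \<Phi>\<nu>_def N_def .
qed

lemma potential_pga_step_ge:
  assumes pot: "is_alpha_potential A P u \<delta> \<alpha> \<Phi>" and \<nu>: "\<nu> \<in> prob_simplex UNIV"
    and \<pi>: "valid_profile A \<pi>" and \<eta>: "0 < \<eta>"
  shows "(\<Sum>s\<in>UNIV. \<nu> s * \<Phi> s (pga_step \<eta> \<pi>)) - (\<Sum>s\<in>UNIV. \<nu> s * \<Phi> s \<pi>)
         \<ge> 1 / (2 * \<eta> * (1 - \<delta>)) *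
             (\<Sum>i\<in>UNIV. \<Sum>s\<in>UNIV. visitation A P \<delta> \<nu> (\<pi>(i := pga_step \<eta> \<pi> i)) s
                * (\<Sum>a\<in>A i. (pga_step \<eta> \<pi> i s a - \<pi> i s a)^2))
           - 4 * \<eta>^2 * max_actions^2 * (real CARD('i))^2 / (1 - \<delta>)^5
           - (real CARD('i))^2 * \<alpha>"
proof -
  define N where "N = real CARD('i)"
  define e where "e = \<eta> * max_actions / (1 - \<delta>)"
  define S where "S i = (\<Sum>s\<in>UNIV. visitation A P \<delta> \<nu> (\<pi>(i := pga_step \<eta> \<pi> i)) s
      * (\<Sum>a\<in>A i. (pga_step \<eta> \<pi> i s a - \<pi> i s a)^2))" for i
  have d0: "0 < 1 - \<delta>" using \<delta>_lt1 by simp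
  have "(\<Sum>i\<in>UNIV. 1 / (\<eta> * (1 - \<delta>)) * S i - 3 * (N * e) * e / (1 - \<delta>)^3) - N * \<alpha>
      \<le> (\<Sum>s\<in>UNIV. \<nu> s * \<Phi> s (pga_step \<eta> \<pi>)) - (\<Sum>s\<in>UNIV. \<nu> s * \<Phi> s \<pi>)"
    unfolding N_def e_def S_def
    by (rule potential_gain_ge_sum[OF pot \<nu> \<pi> valid_pga_step hybrid_gain_pga_step_ge[OF \<pi> \<nu> \<eta>]])
  moreover have "1 / (2 * \<eta> * (1 - \<delta>)) * (\<Sum>i\<in>UNIV. S i) \<le> 1 / (\<eta> * (1 - \<delta>)) * (\<Sum>i\<in>UNIV. S i)"
  proof (intro mult_right_mono)
    show "0 \<le> (\<Sum>i\<in>UNIV. S i)" unfolding S_def visitation_eq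
      using d0 occupancy_nonneg[OF stochastic_joint_prob[OF valid_profile_upd[OF \<pi>]] \<nu>] valid_pga_step
      by (auto intro!: sum_nonneg mult_nonneg_nonneg simp: valid_profile_def)
  qed (use \<eta> d0 in \<open>simp add: field_simps\<close>)
  moreover have "N * (3 * (N * e) * e / (1 - \<delta>)^3) \<le> 4 * \<eta>^2 * max_actions^2 * N^2 / (1 - \<delta>)^5"
  proof -
    have "N * (3 * (N * e) * e / (1 - \<delta>)^3) = 3 * (\<eta>^2 * max_actions^2 * N^2) / (1 - \<delta>)^5"
      unfolding e_def using d0 by (simp add: field_simps power2_eq_square power3_eq_cube power_def)
    also have "\<dots> \<le> 4 * (\<eta>^2 * max_actions^2 * N^2) / (1 - \<delta>)^5"
      using d0 by (intro divide_right_mono mult_right_mono) auto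
    finally show ?thesis by (simp add: mult.assoc)
  qed
  moreover have "N * \<alpha> \<le> N^2 * \<alpha>"
    using alpha_potential_nonneg[OF pot] unfolding N_def
    by (intro mult_right_mono) (auto simp: power2_eq_square)
  ultimately show ?thesis
    unfolding S_def[symmetric] sum_subtractf sum_distrib_left[symmetric] sum_constant N_def by linarith
qed

end

theorem mainTheorem5:
  fixes A :: "'i::finite \<Rightarrow> 'a::finite set"
    and P :: "'s::finite \<Rightarrow> ('i \<Rightarrow> 'a) \<Rightarrow> 's \<Rightarrow> real"
    and u :: "'i \<Rightarrow> 's \<Rightarrow> ('i \<Rightarrow> 'a) \<Rightarrow> real"
    and \<delta> \<alpha> \<eta> :: real
    and \<Phi> :: "'s \<Rightarrow> ('i \<Rightarrow> 's \<Rightarrow> 'a \<Rightarrow> real) \<Rightarrow> real"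
    and \<nu> :: "'s \<Rightarrow> real"
    and t :: nat
  assumes A_ne: "\<And>i. A i \<noteq> {}"
    and P_nonneg: "\<And>s a s'. a \<in> joint A \<Longrightarrow> 0 \<le> P s a s'"
    and P_sum: "\<And>s a. a \<in> joint A \<Longrightarrow> (\<Sum>s'\<in>UNIV. P s a s') = 1"
    and u_range: "\<And>i s a. a \<in> joint A \<Longrightarrow> 0 \<le> u i s a \<and> u i s a \<le> 1"
    and \<delta>_pos: "0 < \<delta>" and \<delta>_lt1: "\<delta> < 1"
    and \<eta>_pos: "0 < \<eta>"
    and pot: "is_alpha_potential A P u \<delta> \<alpha> \<Phi>"
    and \<nu>_dist: "\<nu> \<in> prob_simplex UNIV"
  shows "(\<Sum>s\<in>UNIV. \<nu> s * \<Phi> s (pga A P u \<delta> \<eta> (Suc t)))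
           - (\<Sum>s\<in>UNIV. \<nu> s * \<Phi> s (pga A P u \<delta> \<eta> t))
         \<ge> 1 / (2 * \<eta> * (1 - \<delta>)) *
             (\<Sum>i\<in>UNIV. \<Sum>s\<in>UNIV.
                visitation A P \<delta> \<nu> ((pga A P u \<delta> \<eta> t)(i := pga A P u \<delta> \<eta> (Suc t) i)) s
                * (\<Sum>a\<in>A i. (pga A P u \<delta> \<eta> (Suc t) i s a - pga A P u \<delta> \<eta> t i s a)^2))
           - 4 * \<eta>^2 * (real (Max ((\<lambda>i. card (A i)) ` UNIV)))^2 * (real CARD('i))^2 / (1 - \<delta>)^5
           - (real CARD('i))^2 * \<alpha>"
proof -
  interpret markov_game A P \<delta> u
    by unfold_locales (use A_ne P_nonneg P_sum u_range \<delta>_pos \<delta>_lt1 in auto)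
  show ?thesis
    using potential_pga_step_ge[OF pot \<nu>_dist valid_pga \<eta>_pos]
    unfolding pga_Suc max_actions_def .
qed

end
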